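(* For each odd prime $p$ and each $\epsilon>0$ there is $\delta>0$ such that for every $n$, every set $A\subseteq\mathbb{F}_p^n$ satisfying property $\mathcal{R}(\delta)$ also satisfies property $\mathcal{P}(\epsilon)$.
   Context: Let $N=p^n$ and identify $A\subseteq\mathbb{F}_p^n$ with its indicator function. Property $\mathcal{P}(\epsilon)$: for every affine subspace $H\subseteq\mathbb{F}_p^n$, $\big||A\cap H|-|A||H|/N\big|\le\epsilon N$. Property $\mathcal{R}(\delta)$: for every (linear) subspace $H\subseteq\mathbb{F}_p^n$, $\sum_{x\in\mathbb{F}_p^n,\,d\in H}A(x)A(x+d)A(x+2d)\le |A|^3|H|/N^2+\delta N^2$. *)

theory Defs
  imports "HOL-Analysis.Analysis"
begin

text \<open>F_p^n is modelled as functions nat => nat with coordinates i < n in {0..<p}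
  and all coordinates i >= n equal to 0; arithmetic is coordinatewise mod p.\<close>

definition Fpn :: "nat \<Rightarrow> nat \<Rightarrow> (nat \<Rightarrow> nat) set" where
  "Fpn p n = {x. (\<forall>i<n. x i < p) \<and> (\<forall>i\<ge>n. x i = 0)}"

definition vzero :: "nat \<Rightarrow> nat" where
  "vzero = (\<lambda>i. 0)"

definition vadd :: "nat \<Rightarrow> (nat \<Rightarrow> nat) \<Rightarrow> (nat \<Rightarrow> nat) \<Rightarrow> (nat \<Rightarrow> nat)" where
  "vadd p x y = (\<lambda>i. (x i + y i) mod p)"

definition vsmult :: "nat \<Rightarrow> nat \<Rightarrow> (nat \<Rightarrow> nat) \<Rightarrow> (nat \<Rightarrow> nat)" where
  "vsmult p c x = (\<lambda>i. (c * x i) mod p)"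

definition linear_subspace :: "nat \<Rightarrow> nat \<Rightarrow> (nat \<Rightarrow> nat) set \<Rightarrow> bool" where
  "linear_subspace p n H \<longleftrightarrow>
     H \<subseteq> Fpn p n \<and> vzero \<in> H \<and>
     (\<forall>x\<in>H. \<forall>y\<in>H. vadd p x y \<in> H) \<and>
     (\<forall>c<p. \<forall>x\<in>H. vsmult p c x \<in> H)"

definition affine_subspace :: "nat \<Rightarrow> nat \<Rightarrow> (nat \<Rightarrow> nat) set \<Rightarrow> bool" where
  "affine_subspace p n S \<longleftrightarrow>
     (\<exists>a\<in>Fpn p n. \<exists>H. linear_subspace p n H \<and> S = vadd p a ` H)"

definition propP :: "nat \<Rightarrow> nat \<Rightarrow> real \<Rightarrow> (nat \<Rightarrow> nat) set \<Rightarrow> bool" where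
  "propP p n \<epsilon> A \<longleftrightarrow>
     (\<forall>S. affine_subspace p n S \<longrightarrow>
        \<bar>real (card (A \<inter> S)) - real (card A) * real (card S) / real (p ^ n)\<bar>
          \<le> \<epsilon> * real (p ^ n))"

definition propR :: "nat \<Rightarrow> nat \<Rightarrow> real \<Rightarrow> (nat \<Rightarrow> nat) set \<Rightarrow> bool" where
  "propR p n \<delta> A \<longleftrightarrow>
     (\<forall>H. linear_subspace p n H \<longrightarrow>
        (\<Sum>x\<in>Fpn p n. \<Sum>d\<in>H.
            of_bool (x \<in> A) * of_bool (vadd p x d \<in> A)
              * of_bool (vadd p x (vsmult p 2 d) \<in> A) :: real)
          \<le> real (card A) ^ 3 * real (card H) / real (p ^ n) ^ 2
             + \<delta> * real (p ^ n) ^ 2)"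

end

theory Submission
  imports Defs "HOL-Number_Theory.Cong"
begin

text \<open>Suppose \<open>A\<close> has the wrong number of points on a coset \<open>a0 + H0\<close>. Then the averages of
  \<open>1\<^sub>A\<close> over the cosets of \<open>H0\<close> have variance at least \<open>\<epsilon>\<^sup>2 N\<close>. Refine \<open>H0\<close> repeatedly by
  intersecting with the annihilator of the large Fourier spectrum of \<open>1\<^sub>A\<close>. The energy (the squared
  \<open>L\<^sup>2\<close>-norm of the averages) increases along this chain and is at most \<open>N\<close>, so within \<open>2/\<epsilon>\<^sup>3\<close>
  steps some refinement \<open>K' \<subseteq> K\<close> raises it by at most \<open>\<epsilon>\<^sup>3 N/2\<close>. Split
  \<open>1\<^sub>A = f_str + f_sml + f_unf\<close>: the average over cosets of \<open>K\<close>, the correction to the average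
  over cosets of \<open>K'\<close>, and a remainder whose Fourier coefficients are all small. Counting 3-term
  progressions with common difference in \<open>K\<close>, the structured part contributes at least
  \<open>|K| (N\<alpha>\<^sup>3 + 2\<alpha> \<cdot> variance)\<close> by convexity, the small part costs at most \<open>|K|\<close> times the energy
  increment, and every term involving \<open>f_unf\<close> is bounded by Parseval. This gives at least
  \<open>|K| N (\<alpha>\<^sup>3 + \<epsilon>\<^sup>3)\<close> progressions, and since \<open>|K|\<close> is bounded below by a fraction of \<open>N\<close>
  depending only on \<open>p\<close> and \<open>\<epsilon>\<close>, property R(\<delta>) fails for small \<open>\<delta>\<close>.\<close>

lemma sum_inj_endo:
  assumes "finite S" "g ` S \<subseteq> S" "inj_on g S"
  shows "(\<Sum>x\<in>S. f (g x)) = (\<Sum>x\<in>S. f x)"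
proof -
  have "g ` S = S" using assms by (meson card_image card_subset_eq)
  then have "(\<Sum>x\<in>S. f x) = (\<Sum>x\<in>g ` S. f x)" by simp
  also have "\<dots> = (\<Sum>x\<in>S. f (g x))" using assms(3) by (simp add: sum.reindex)
  finally show ?thesis by simp
qed

lemma sum_swap_outer_pairs:
  "(\<Sum>x\<in>A. \<Sum>d\<in>B. \<Sum>u\<in>C. \<Sum>v\<in>D. F x d u v) = (\<Sum>u\<in>C. \<Sum>v\<in>D. \<Sum>x\<in>A. \<Sum>d\<in>B. F x d u v)"
proof -
  have "(\<Sum>x\<in>A. \<Sum>d\<in>B. \<Sum>u\<in>C. \<Sum>v\<in>D. F x d u v) = (\<Sum>x\<in>A. \<Sum>u\<in>C. \<Sum>d\<in>B. \<Sum>v\<in>D. F x d u v)"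
    by (rule sum.cong[OF refl], rule sum.swap)
  also have "\<dots> = (\<Sum>x\<in>A. \<Sum>u\<in>C. \<Sum>v\<in>D. \<Sum>d\<in>B. F x d u v)"
    by (rule sum.cong[OF refl], rule sum.cong[OF refl], rule sum.swap)
  also have "\<dots> = (\<Sum>u\<in>C. \<Sum>x\<in>A. \<Sum>v\<in>D. \<Sum>d\<in>B. F x d u v)"
    by (rule sum.swap)
  also have "\<dots> = (\<Sum>u\<in>C. \<Sum>v\<in>D. \<Sum>x\<in>A. \<Sum>d\<in>B. F x d u v)"
    by (rule sum.cong[OF refl], rule sum.swap)
  finally show ?thesis .
qed

lemma sum_sum_mult_product:
  fixes K :: "'a::comm_ring_1"
  shows "(\<Sum>x\<in>A. \<Sum>d\<in>B. K * (P x * Q d)) = K * ((\<Sum>x\<in>A. P x) * (\<Sum>d\<in>B. Q d))"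
proof -
  have "(\<Sum>x\<in>A. P x) * (\<Sum>d\<in>B. Q d) = (\<Sum>x\<in>A. \<Sum>d\<in>B. P x * Q d)" by (rule sum_product)
  then show ?thesis by (simp add: sum_distrib_left)
qed

lemma sum_mult3_le:
  fixes A B C :: "'a \<Rightarrow> real"
  assumes A: "\<forall>x\<in>X. 0 \<le> A x \<and> A x \<le> \<eta>" and \<eta>: "0 \<le> \<eta>"
    and B: "\<forall>x\<in>X. 0 \<le> B x" and C: "\<forall>x\<in>X. 0 \<le> C x"
    and B2: "(\<Sum>x\<in>X. (B x)^2) \<le> 1" and C2: "(\<Sum>x\<in>X. (C x)^2) \<le> 1"
  shows "(\<Sum>x\<in>X. A x * B x * C x) \<le> \<eta>"
proof -
  have "(\<Sum>x\<in>X. A x * B x * C x) \<le> (\<Sum>x\<in>X. \<eta> * (((B x)^2 + (C x)^2) / 2))"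
  proof (rule sum_mono)
    fix x assume "x \<in> X"
    then have "A x * (B x * C x) \<le> \<eta> * (B x * C x)"
      using A B C by (intro mult_right_mono) auto
    also have "\<dots> \<le> \<eta> * (((B x)^2 + (C x)^2) / 2)"
      using sum_squares_bound[of "B x" "C x"] \<eta> by (intro mult_left_mono) simp_all
    finally show "A x * B x * C x \<le> \<eta> * (((B x)^2 + (C x)^2) / 2)" by (simp add: mult.assoc)
  qed
  also have "\<dots> = \<eta> * ((\<Sum>x\<in>X. (B x)^2) + (\<Sum>x\<in>X. (C x)^2)) / 2"
    by (simp add: sum_distrib_left sum.distrib sum_divide_distrib[symmetric] algebra_simps)
  also have "\<dots> \<le> \<eta> * 2 / 2"
    using B2 C2 \<eta> by (intro divide_right_mono mult_left_mono) simp_all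
  finally show ?thesis by simp
qed

lemma cnj_mult_mult_square_units:
  fixes a b :: complex
  assumes "cnj a * a = 1" "cnj b * b = 1"
  shows "cnj (a * b) * (a * b ^ 2) = b"
proof -
  have "cnj (a * b) * (a * b ^ 2) = (cnj a * a) * (cnj b * b) * b"
    by (simp add: power2_eq_square mult_ac)
  then show ?thesis using assms by simp
qed

lemma sum_cube_ge_variance:
  fixes t :: "'a \<Rightarrow> real"
  assumes t: "\<And>x. x \<in> X \<Longrightarrow> 0 \<le> t x" and \<alpha>: "0 \<le> \<alpha>"
    and mean: "(\<Sum>x\<in>X. t x) = real (card X) * \<alpha>"
  shows "real (card X) * \<alpha> ^ 3 + 2 * \<alpha> * (\<Sum>x\<in>X. (t x - \<alpha>)^2) \<le> (\<Sum>x\<in>X. t x ^ 3)"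
proof -
  have tangent: "\<alpha> ^ 3 + 3 * \<alpha> ^ 2 * (s - \<alpha>) + 2 * \<alpha> * (s - \<alpha>)^2 \<le> s ^ 3" if "0 \<le> s" for s
  proof -
    have "s ^ 3 - (\<alpha> ^ 3 + 3 * \<alpha> ^ 2 * (s - \<alpha>) + 2 * \<alpha> * (s - \<alpha>)^2) = s * (s - \<alpha>)^2"
      by (simp add: power2_eq_square power3_eq_cube algebra_simps)
    then show ?thesis using that by (smt (verit) zero_le_mult_iff zero_le_power2)
  qed
  have "(\<Sum>x\<in>X. \<alpha> ^ 3 + 3 * \<alpha> ^ 2 * (t x - \<alpha>) + 2 * \<alpha> * (t x - \<alpha>)^2) \<le> (\<Sum>x\<in>X. t x ^ 3)"
    by (rule sum_mono, rule tangent, rule t)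
  moreover have "(\<Sum>x\<in>X. \<alpha> ^ 3 + 3 * \<alpha> ^ 2 * (t x - \<alpha>) + 2 * \<alpha> * (t x - \<alpha>)^2)
      = real (card X) * \<alpha> ^ 3 + 3 * \<alpha> ^ 2 * ((\<Sum>x\<in>X. t x) - real (card X) * \<alpha>)
        + 2 * \<alpha> * (\<Sum>x\<in>X. (t x - \<alpha>)^2)"
    by (simp add: sum.distrib sum_distrib_left sum_distrib_right sum_subtractf algebra_simps)
  ultimately show ?thesis using mean by simp
qed

lemma exists_small_increment:
  fixes f :: "nat \<Rightarrow> real"
  assumes "0 \<le> f 0" "f M \<le> B" "B < real M * c"
  shows "\<exists>j<M. f (Suc j) - f j \<le> c"
proof (rule ccontr)
  assume "\<not> ?thesis"
  then have step: "j < M \<Longrightarrow> f j + c < f (Suc j)" for j by force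
  have "j \<le> M \<Longrightarrow> f 0 + real j * c \<le> f j" for j
  proof (induction j)
    case (Suc j)
    then show ?case using step[of j] by (simp add: algebra_simps)
  qed simp
  from this[of M] show False using assms by linarith
qed

section \<open>Arithmetic in \<open>F\<^sub>p\<^sup>n\<close>\<close>

definition vneg :: "nat \<Rightarrow> (nat \<Rightarrow> nat) \<Rightarrow> (nat \<Rightarrow> nat)" where
  "vneg p x = vsmult p (p - 1) x"

definition dotp :: "nat \<Rightarrow> (nat \<Rightarrow> nat) \<Rightarrow> (nat \<Rightarrow> nat) \<Rightarrow> nat" where
  "dotp n u x = (\<Sum>i<n. u i * x i)"

lemma Fpn_0: "Fpn p 0 = {vzero}"
  by (auto simp: Fpn_def vzero_def)

lemma Fpn_Suc: "Fpn p (Suc n) = (\<lambda>(x,t). x(n:=t)) ` (Fpn p n \<times> {..<p})"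
proof (intro set_eqI iffI)
  fix x assume x: "x \<in> Fpn p (Suc n)"
  have "x = (\<lambda>(y,t). y(n:=t)) (x(n:=0), x n)" by auto
  moreover have "(x(n:=0), x n) \<in> Fpn p n \<times> {..<p}"
    using x by (auto simp: Fpn_def)
  ultimately show "x \<in> (\<lambda>(x,t). x(n:=t)) ` (Fpn p n \<times> {..<p})" by blast
next
  fix x assume "x \<in> (\<lambda>(x,t). x(n:=t)) ` (Fpn p n \<times> {..<p})"
  then show "x \<in> Fpn p (Suc n)" by (auto simp: Fpn_def less_Suc_eq)
qed

lemma Fpn_Suc_inj: "inj_on (\<lambda>(x,t). x(n:=t)) (Fpn p n \<times> {..<p})"
proof (rule inj_onI, clarify)
  fix x t y s assume "x \<in> Fpn p n" "y \<in> Fpn p n" "x(n := t) = y(n := s)"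
  moreover from this have "x n = 0" "y n = 0" by (simp_all add: Fpn_def)
  ultimately show "x = y \<and> t = s"
    by (metis fun_upd_idem_iff fun_upd_same fun_upd_upd)
qed

lemma Fpn_finite_card: "finite (Fpn p n) \<and> card (Fpn p n) = p ^ n"
proof (induction n)
  case 0 then show ?case by (simp add: Fpn_0)
next
  case (Suc n)
  then show ?case using Fpn_Suc_inj[of n p]
    by (simp add: Fpn_Suc card_image card_cartesian_product)
qed

lemma finite_Fpn[simp]: "finite (Fpn p n)" using Fpn_finite_card by blast
lemma card_Fpn[simp]: "card (Fpn p n) = p ^ n" using Fpn_finite_card by blast

lemma vzero_in_Fpn[simp]: "0 < p \<Longrightarrow> vzero \<in> Fpn p n"
  by (simp add: Fpn_def vzero_def)

lemma vadd_in_Fpn[simp]: "0 < p \<Longrightarrow> x \<in> Fpn p n \<Longrightarrow> y \<in> Fpn p n \<Longrightarrow> vadd p x y \<in> Fpn p n"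
  by (simp add: Fpn_def vadd_def)

lemma vsmult_in_Fpn[simp]: "0 < p \<Longrightarrow> x \<in> Fpn p n \<Longrightarrow> vsmult p c x \<in> Fpn p n"
  by (simp add: Fpn_def vsmult_def)

lemma vneg_in_Fpn[simp]: "0 < p \<Longrightarrow> x \<in> Fpn p n \<Longrightarrow> vneg p x \<in> Fpn p n"
  by (simp add: vneg_def)

lemma Fpn_eqI_cong:
  assumes "x \<in> Fpn p n" "y \<in> Fpn p n" "\<And>i. i < n \<Longrightarrow> [x i = y i] (mod p)"
  shows "x = y"
proof
  fix i show "x i = y i"
  proof (cases "i < n")
    case True then show ?thesis using assms cong_less_imp_eq_nat[of "x i" p "y i"]
      by (auto simp: Fpn_def)
  next
    case False then show ?thesis using assms by (auto simp: Fpn_def)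
  qed
qed

lemma vadd_cong: "[vadd p x y i = x i + y i] (mod p)"
  by (simp add: vadd_def cong_def)

lemma vsmult_cong: "[vsmult p c x i = c * x i] (mod p)"
  by (simp add: vsmult_def cong_def)

lemma vadd_comm: "vadd p x y = vadd p y x"
  by (simp add: vadd_def add.commute)

lemma vadd_assoc: "vadd p (vadd p x y) z = vadd p x (vadd p y z)"
  by (simp add: vadd_def fun_eq_iff mod_add_left_eq mod_add_right_eq add.assoc)

lemma vsmult_2_eq_vadd: "vsmult p 2 d = vadd p d d"
  by (simp add: vsmult_def vadd_def mult_2)

lemma vadd_zero[simp]: "x \<in> Fpn p n \<Longrightarrow> vadd p x vzero = x"
proof -
  assume x: "x \<in> Fpn p n"
  show ?thesis
  proof
    fix i show "vadd p x vzero i = x i"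
      using x by (cases "i < n") (auto simp: vadd_def vzero_def Fpn_def)
  qed
qed

lemma vadd_neg[simp]:
  assumes "0 < p" "x \<in> Fpn p n" shows "vadd p x (vneg p x) = vzero"
proof (rule Fpn_eqI_cong[of _ p n])
  fix i assume "i < n"
  have "[vadd p x (vneg p x) i = x i + (p - 1) * x i] (mod p)"
    using vadd_cong[of p x "vneg p x" i] vsmult_cong[of p "p-1" x i]
    by (metis cong_add_lcancel_nat cong_trans vneg_def)
  moreover have "x i + (p - 1) * x i = p * x i" using assms(1)
    by (metis Suc_diff_1 add.commute mult_Suc)
  ultimately show "[vadd p x (vneg p x) i = vzero i] (mod p)"
    by (simp add: vzero_def cong_def)
qed (use assms in auto)

lemma vadd_right_cancel:
  assumes "x \<in> Fpn p n" "y \<in> Fpn p n" "vadd p x d = vadd p y d"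
  shows "x = y"
proof (rule Fpn_eqI_cong[OF assms(1,2)])
  fix i assume "i < n"
  have "[x i + d i = y i + d i] (mod p)"
    using vadd_cong[of p x d i] vadd_cong[of p y d i] assms(3)
    by (metis cong_sym cong_trans)
  then show "[x i = y i] (mod p)" by (simp add: cong_add_rcancel_nat)
qed

lemma vsmult_left_cancel:
  assumes "coprime c p" "x \<in> Fpn p n" "y \<in> Fpn p n" "vsmult p c x = vsmult p c y"
  shows "x = y"
proof (rule Fpn_eqI_cong[OF assms(2,3)])
  fix i assume "i < n"
  have "[c * x i = c * y i] (mod p)"
    using vsmult_cong[of p c x i] vsmult_cong[of p c y i] assms(4)
    by (metis cong_sym cong_trans)
  then show "[x i = y i] (mod p)" using assms(1) by (simp add: cong_mult_lcancel_nat)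
qed

lemma sum_Fpn_translate:
  assumes "0 < p" "d \<in> Fpn p n"
  shows "(\<Sum>x\<in>Fpn p n. f (vadd p x d)) = (\<Sum>x\<in>Fpn p n. f x)"
  by (rule sum_inj_endo) (use assms vadd_right_cancel in \<open>auto intro: inj_onI\<close>)

lemma sum_Fpn_scale:
  assumes "0 < p" "coprime c p"
  shows "(\<Sum>x\<in>Fpn p n. f (vsmult p c x)) = (\<Sum>x\<in>Fpn p n. f x)"
  by (rule sum_inj_endo) (use assms vsmult_left_cancel in \<open>auto intro: inj_onI\<close>)

locale Fpn_space =
  fixes p n :: nat
  assumes p_prime: "prime p" and p_odd: "odd p"
begin

abbreviation "V \<equiv> Fpn p n"
abbreviation "N \<equiv> p ^ n"

lemma p_pos[simp]: "0 < p" using p_prime prime_gt_0_nat by blast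
lemma p_gt1: "1 < p" using p_prime prime_gt_1_nat by blast
lemma p_ge3: "3 \<le> p"
proof -
  have "p \<noteq> 2" using p_odd by auto
  then show ?thesis using p_gt1 by linarith
qed

lemma coprime_less: "0 < c \<Longrightarrow> c < p \<Longrightarrow> coprime c p"
proof -
  assume "0 < c" "c < p"
  then have "\<not> p dvd c" by (auto dest: dvd_imp_le)
  then have "coprime p c" using p_prime by (simp add: prime_imp_coprime_nat)
  then show ?thesis by (simp add: coprime_commute)
qed

lemma coprime_2: "coprime 2 p"
  using coprime_less[of 2] p_ge3 by simp

end

section \<open>Averages over the cosets of a subspace\<close>

locale Fpn_subspace = Fpn_space +
  fixes H assumes linear_subspace_H: "linear_subspace p n H"
begin

lemma H_subset: "H \<subseteq> V" using linear_subspace_H by (simp add: linear_subspace_def)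
lemma H_in_Fpn: "h \<in> H \<Longrightarrow> h \<in> V" using H_subset by blast
lemma finite_H[simp]: "finite H" by (rule finite_subset[OF H_subset]) simp
lemma vzero_in_H[simp]: "vzero \<in> H" using linear_subspace_H by (simp add: linear_subspace_def)
lemma card_H_pos: "0 < card H" using vzero_in_H finite_H card_gt_0_iff by (metis empty_iff)
lemma vadd_in_H[simp]: "x \<in> H \<Longrightarrow> y \<in> H \<Longrightarrow> vadd p x y \<in> H"
  using linear_subspace_H by (simp add: linear_subspace_def)
lemma vsmult_in_H[simp]: "c < p \<Longrightarrow> x \<in> H \<Longrightarrow> vsmult p c x \<in> H"
  using linear_subspace_H by (simp add: linear_subspace_def)
lemma vneg_in_H[simp]: "x \<in> H \<Longrightarrow> vneg p x \<in> H"
  by (simp add: vneg_def)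
lemma double_in_H[simp]: "x \<in> H \<Longrightarrow> vsmult p 2 x \<in> H"
  using p_ge3 by simp

lemma H_nonempty: "H \<noteq> {}" using vzero_in_H by blast

lemma sum_H_eq_indicator:
  fixes g :: "(nat \<Rightarrow> nat) \<Rightarrow> 'a::semiring_1"
  shows "(\<Sum>d\<in>H. g d) = (\<Sum>d\<in>V. (if d \<in> H then 1 else 0) * g d)"
proof -
  have "(\<Sum>d\<in>V. (if d \<in> H then 1 else 0) * g d) = (\<Sum>d\<in>V. if d \<in> H then g d else 0)"
    by (rule sum.cong) auto
  also have "\<dots> = (\<Sum>d\<in>V \<inter> H. g d)" by (simp add: sum.inter_restrict)
  also have "V \<inter> H = H" using H_subset by blast
  finally show ?thesis by simp
qed

lemma sum_H_translate:
  assumes h0: "h0 \<in> H" shows "(\<Sum>h\<in>H. f (vadd p h0 h)) = (\<Sum>h\<in>H. f h)"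
proof (rule sum_inj_endo)
  show "inj_on (vadd p h0) H"
  proof (rule inj_onI)
    fix x y assume "x \<in> H" "y \<in> H" "vadd p h0 x = vadd p h0 y"
    then have "vadd p x h0 = vadd p y h0" by (simp add: vadd_comm)
    then show "x = y" using \<open>x \<in> H\<close> \<open>y \<in> H\<close> by (meson H_in_Fpn vadd_right_cancel)
  qed
qed (use h0 in auto)

lemma sum_H_double: "(\<Sum>h\<in>H. f (vsmult p 2 h)) = (\<Sum>h\<in>H. f h)"
  by (rule sum_inj_endo) (auto intro!: inj_onI dest: H_in_Fpn intro: vsmult_left_cancel[OF coprime_2])

lemma sum_H_neg: "(\<Sum>h\<in>H. f (vneg p h)) = (\<Sum>h\<in>H. f h)"
proof (rule sum_inj_endo)
  have cp: "coprime (p - 1) p" using p_gt1 by (intro coprime_less) auto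
  show "inj_on (vneg p) H"
    by (auto intro!: inj_onI dest: H_in_Fpn simp: vneg_def intro: vsmult_left_cancel[OF cp])
qed auto

definition avg :: "((nat \<Rightarrow> nat) \<Rightarrow> 'a::field_char_0) \<Rightarrow> (nat \<Rightarrow> nat) \<Rightarrow> 'a" where
  "avg f x = (\<Sum>h\<in>H. f (vadd p x h)) / of_nat (card H)"

lemma avg_translate_H: "x \<in> V \<Longrightarrow> h0 \<in> H \<Longrightarrow> avg f (vadd p x h0) = avg f x"
  unfolding avg_def using sum_H_translate[of h0 "\<lambda>h. f (vadd p x h)"]
  by (simp add: vadd_assoc)

lemma avg_const[simp]: "avg (\<lambda>_. c) x = c"
  using H_nonempty by (simp add: avg_def)

lemma avg_diff: "avg (\<lambda>x. f x - g x) y = avg f y - avg g y"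
  by (simp add: avg_def sum_subtractf diff_divide_distrib)

lemma avg_of_real: "of_real (avg f x) = avg (\<lambda>y. of_real (f y) :: 'a::{field_char_0,real_field}) x"
  by (simp add: avg_def of_real_sum of_real_divide)

lemma avg_bounds:
  assumes "\<And>x. 0 \<le> f x" "\<And>x. f x \<le> (1::real)"
  shows "0 \<le> avg f x" "avg f x \<le> 1"
proof -
  show "0 \<le> avg f x" unfolding avg_def using assms by (simp add: sum_nonneg)
  have "(\<Sum>h\<in>H. f (vadd p x h)) \<le> of_nat (card H)"
    using sum_mono[of H "\<lambda>h. f (vadd p x h)" "\<lambda>_. 1"] assms by simp
  then show "avg f x \<le> 1" unfolding avg_def using card_H_pos by simp
qed

lemma sum_translate_mult:
  assumes "h \<in> V"
  shows "(\<Sum>x\<in>V. f (vadd p x h) * g x) = (\<Sum>y\<in>V. f y * g (vadd p y (vneg p h)))"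
proof -
  have "(\<Sum>x\<in>V. f (vadd p x h) * g x)
     = (\<Sum>y\<in>V. f (vadd p (vadd p y (vneg p h)) h) * g (vadd p y (vneg p h)))"
    using sum_Fpn_translate[OF p_pos vneg_in_Fpn[OF p_pos assms], of "\<lambda>x. f (vadd p x h) * g x"] by simp
  also have "\<dots> = (\<Sum>y\<in>V. f y * g (vadd p y (vneg p h)))"
  proof (rule sum.cong[OF refl])
    fix y assume "y \<in> V"
    have "vadd p (vadd p y (vneg p h)) h = y"
      using assms \<open>y \<in> V\<close>
      by (simp add: vadd_assoc vadd_comm[of p "vneg p h" h])
    then show "f (vadd p (vadd p y (vneg p h)) h) * g (vadd p y (vneg p h))
             = f y * g (vadd p y (vneg p h))" by simp
  qed
  finally show ?thesis .
qed

lemma avg_self_adjoint: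
  "(\<Sum>x\<in>V. avg f x * g x) = (\<Sum>x\<in>V. f x * avg g x)"
proof -
  have "(\<Sum>x\<in>V. avg f x * g x) = (\<Sum>x\<in>V. \<Sum>h\<in>H. f (vadd p x h) * g x) / of_nat (card H)"
    by (simp add: avg_def sum_divide_distrib sum_distrib_right)
  also have "(\<Sum>x\<in>V. \<Sum>h\<in>H. f (vadd p x h) * g x) = (\<Sum>h\<in>H. \<Sum>x\<in>V. f (vadd p x h) * g x)"
    by (rule sum.swap)
  also have "\<dots> = (\<Sum>h\<in>H. \<Sum>y\<in>V. f y * g (vadd p y (vneg p h)))"
    by (rule sum.cong[OF refl]) (rule sum_translate_mult, erule H_in_Fpn)
  also have "\<dots> = (\<Sum>y\<in>V. f y * (\<Sum>h\<in>H. g (vadd p y (vneg p h))))"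
    by (simp add: sum.swap[of _ H] sum_distrib_left)
  also have "\<dots> = (\<Sum>y\<in>V. f y * (\<Sum>h\<in>H. g (vadd p y h)))"
    using sum_H_neg[of "\<lambda>h. g (vadd p _ h)"] by simp
  finally show ?thesis by (simp add: avg_def sum_divide_distrib sum_distrib_left)
qed

lemma avg_avg: "x \<in> V \<Longrightarrow> avg (avg f) x = avg f x"
proof -
  assume x: "x \<in> V"
  have "avg (avg f) x = (\<Sum>h\<in>H. avg f x) / of_nat (card H)"
    unfolding avg_def[of "avg f"]
    by (rule arg_cong[where f="\<lambda>t. t / _"], rule sum.cong[OF refl], rule avg_translate_H[OF x])
  then show ?thesis using H_nonempty by simp
qed

lemma sum_avg: "(\<Sum>x\<in>V. avg f x) = (\<Sum>x\<in>V. f x)"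
  using avg_self_adjoint[of f "\<lambda>_. 1"] by simp

end

lemma (in Fpn_space) Fpn_subspace_iff: "Fpn_subspace p n K \<longleftrightarrow> linear_subspace p n K"
  by (simp add: Fpn_subspace_def Fpn_subspace_axioms_def Fpn_space_axioms)

locale nested_subspaces = Fpn_space +
  fixes H H' assumes H: "linear_subspace p n H" and H': "linear_subspace p n H'" and sub: "H' \<subseteq> H"
begin

sublocale coarse: Fpn_subspace p n H using H by unfold_locales
sublocale fine: Fpn_subspace p n H' using H' by unfold_locales

lemma avg_avg_finer: "x \<in> V \<Longrightarrow> coarse.avg (fine.avg f) x = coarse.avg f x"
proof -
  assume x: "x \<in> V"
  have "coarse.avg (fine.avg f) x = (\<Sum>h\<in>H. \<Sum>h'\<in>H'. f (vadd p (vadd p x h) h')) / of_nat (card H') / of_nat (card H)"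
    by (simp add: coarse.avg_def fine.avg_def sum_divide_distrib)
  also have "(\<Sum>h\<in>H. \<Sum>h'\<in>H'. f (vadd p (vadd p x h) h')) = (\<Sum>h'\<in>H'. \<Sum>h\<in>H. f (vadd p x (vadd p h' h)))"
  proof -
    have e: "vadd p (vadd p x h) h' = vadd p x (vadd p h' h)" for h h'
      by (simp add: vadd_assoc vadd_comm[of p h h'])
    show ?thesis by (subst sum.swap) (simp add: e)
  qed
  also have "\<dots> = (\<Sum>h'\<in>H'. \<Sum>h\<in>H. f (vadd p x h))"
    by (rule sum.cong[OF refl]) (rule coarse.sum_H_translate, use sub in blast)
  also have "\<dots> = of_nat (card H') * (\<Sum>h\<in>H. f (vadd p x h))" by simp
  finally show ?thesis using fine.card_H_pos fine.H_nonempty by (simp add: coarse.avg_def)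
qed

end

section \<open>Characters and the Fourier transform\<close>

definition ep :: "nat \<Rightarrow> nat \<Rightarrow> complex" where
  "ep p k = exp (2 * complex_of_real pi * \<i> * complex_of_nat k / complex_of_nat p)"

lemma ep_add: "ep p (a + b) = ep p a * ep p b"
  by (simp add: ep_def add_divide_distrib distrib_left exp_add)

lemma ep_0[simp]: "ep p 0 = 1" by (simp add: ep_def)

lemma ep_1_iff: "1 \<le> p \<Longrightarrow> ep p k = 1 \<longleftrightarrow> p dvd k"
  unfolding ep_def by (rule complex_root_unity_eq_1)

lemma ep_mult: "ep p (k * t) = ep p k ^ t"
  by (induction t) (simp_all add: ep_add)

lemma ep_mod: assumes "1 \<le> p" shows "ep p a = ep p (a mod p)"
proof -
  have "ep p a = ep p (a mod p) * ep p (p*(a div p))"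
    using ep_add[of p "a mod p" "p * (a div p)"] by (simp only: mod_mult_div_eq)
  moreover have "ep p (p*(a div p)) = 1" using ep_1_iff[OF assms] by simp
  ultimately show ?thesis by simp
qed

lemma ep_cong: assumes "1 \<le> p" "[a = b] (mod p)" shows "ep p a = ep p b"
  using ep_mod[OF assms(1), of a] ep_mod[OF assms(1), of b] assms(2) by (simp add: cong_def)

lemma ep_norm[simp]: "norm (ep p k) = 1"
proof -
  have "2 * complex_of_real pi * \<i> * complex_of_nat k / complex_of_nat p = \<i> * complex_of_real (2 * pi * k / p)"
    by simp
  then show ?thesis unfolding ep_def by (simp only:) (rule norm_exp_i_times)
qed

lemma ep_cnj_mult[simp]: "cnj (ep p k) * ep p k = 1"
  using ep_norm[of p k] by (metis complex_norm_square mult.commute of_real_1 power_one)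

lemma ep_nz[simp]: "ep p k \<noteq> 0" by (simp add: ep_def)

lemma ep_cnj: assumes "1 \<le> p" shows "cnj (ep p k) = ep p ((p - 1) * k)"
proof -
  have "ep p ((p - 1) * k) * ep p k = ep p (p * k)"
  proof -
    obtain q where q: "p = Suc q" using assms by (cases p) auto
    show ?thesis unfolding ep_add[symmetric] by (simp add: q add.commute)
  qed
  also have "\<dots> = 1" using ep_1_iff[OF assms] by simp
  finally have "ep p ((p - 1) * k) * ep p k = cnj (ep p k) * ep p k" by simp
  then show ?thesis using ep_nz[of p k] by (metis mult_cancel_right)
qed

lemma sum_ep_geometric:
  assumes "1 \<le> p"
  shows "(\<Sum>t<p. ep p (k * t)) = (if p dvd k then of_nat p else 0)"
proof (cases "p dvd k")
  case True
  then have "\<And>t. ep p (k * t) = 1" using ep_1_iff[OF assms] by auto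
  then show ?thesis using True by simp
next
  case False
  then have ne: "ep p k \<noteq> 1" using ep_1_iff[OF assms] by auto
  have "(\<Sum>t<p. ep p (k * t)) = (\<Sum>t<p. ep p k ^ t)" by (simp add: ep_mult)
  also have "\<dots> = (ep p k ^ p - 1) / (ep p k - 1)" using geometric_sum[OF ne] by simp
  also have "ep p k ^ p = 1" using ep_mult[of p k p, symmetric] ep_1_iff[OF assms, of "k * p"] by simp
  finally show ?thesis using False by simp
qed

lemma dotp_Suc_upd: "dotp (Suc n) w (x(n:=t)) = dotp n w x + w n * t"
  unfolding dotp_def by (simp add: sum.lessThan_Suc)

lemma sum_ep_dotp:
  assumes "1 \<le> p"
  shows "(\<Sum>x\<in>Fpn p n. ep p (dotp n w x)) = (if \<forall>i<n. p dvd w i then of_nat (p ^ n) else 0)"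
proof (induction n)
  case 0 then show ?case by (simp add: Fpn_0 dotp_def)
next
  case (Suc n)
  have "(\<Sum>x\<in>Fpn p (Suc n). ep p (dotp (Suc n) w x))
      = (\<Sum>xt\<in>Fpn p n \<times> {..<p}. ep p (dotp (Suc n) w ((\<lambda>(x,t). x(n:=t)) xt)))"
    unfolding Fpn_Suc by (rule sum.reindex[OF Fpn_Suc_inj, unfolded comp_def])
  also have "\<dots> = (\<Sum>xt\<in>Fpn p n \<times> {..<p}. ep p (dotp n w (fst xt)) * ep p (w n * snd xt))"
    by (rule sum.cong[OF refl]) (auto simp: dotp_Suc_upd ep_add)
  also have "\<dots> = (\<Sum>x\<in>Fpn p n. ep p (dotp n w x)) * (\<Sum>t<p. ep p (w n * t))"
    by (simp add: sum_product sum.cartesian_product split_def)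
  also have "\<dots> = (if \<forall>i<Suc n. p dvd w i then of_nat (p ^ Suc n) else 0)"
    using Suc sum_ep_geometric[OF assms, of "w n"] by (auto simp: less_Suc_eq)
  finally show ?case .
qed

context Fpn_space begin

definition chi :: "(nat \<Rightarrow> nat) \<Rightarrow> (nat \<Rightarrow> nat) \<Rightarrow> complex" where
  "chi u x = ep p (dotp n u x)"

lemma one_le_p: "1 \<le> p" using p_pos by linarith

lemma chi_norm[simp]: "norm (chi u x) = 1" by (simp add: chi_def)
lemma chi_cnj_mult[simp]: "cnj (chi u x) * chi u x = 1" by (simp add: chi_def)
lemma chi_nz[simp]: "chi u x \<noteq> 0" by (simp add: chi_def)

lemma chi_comm: "chi u x = chi x u"
  by (simp add: chi_def dotp_def mult.commute)

lemma chi_cong_x: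
  assumes "\<And>i. i < n \<Longrightarrow> [x i = y i] (mod p)" shows "chi u x = chi u y"
  unfolding chi_def dotp_def
  by (rule ep_cong[OF one_le_p], rule cong_sum, rule cong_scalar_left) (use assms in auto)

lemma chi_add_x: "chi u (vadd p x y) = chi u x * chi u y"
proof -
  have "[dotp n u (vadd p x y) = dotp n u x + dotp n u y] (mod p)"
    unfolding dotp_def sum.distrib[symmetric] distrib_left[symmetric]
    by (rule cong_sum, rule cong_scalar_left, rule vadd_cong)
  then show ?thesis unfolding chi_def by (simp add: ep_cong[OF one_le_p] ep_add)
qed

lemma chi_add_u: "chi (vadd p u v) x = chi u x * chi v x"
  using chi_add_x chi_comm by metis

lemma chi_zero[simp]: "chi u vzero = 1"
  by (simp add: chi_def dotp_def vzero_def)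

lemma chi_smult_x: "chi u (vsmult p c x) = chi u x ^ c"
proof -
  have "[dotp n u (vsmult p c x) = dotp n u x * c] (mod p)"
    unfolding dotp_def sum_distrib_right
    by (rule cong_sum) (metis cong_scalar_left mult.assoc mult.commute vsmult_cong)
  then show ?thesis unfolding chi_def by (simp add: ep_cong[OF one_le_p] ep_mult)
qed

lemma chi_smult_u: "chi (vsmult p c u) x = chi u x ^ c"
  using chi_smult_x chi_comm by metis

lemma chi_neg_x: "chi u (vneg p x) = cnj (chi u x)"
proof -
  have "[dotp n u (vneg p x) = (p - 1) * dotp n u x] (mod p)"
    unfolding dotp_def sum_distrib_left vneg_def
    by (rule cong_sum) (metis cong_scalar_left mult.assoc mult.commute vsmult_cong)
  then show ?thesis unfolding chi_def by (simp add: ep_cong[OF one_le_p] ep_cnj[OF one_le_p])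
qed

lemma chi_neg_u: "chi (vneg p u) x = cnj (chi u x)"
  using chi_neg_x chi_comm by metis

lemma chi_progression: "cnj (chi t (vadd p x d)) * chi t (vadd p x (vsmult p 2 d)) = chi t d"
  unfolding chi_add_x chi_smult_x by (rule cnj_mult_mult_square_units) simp_all

lemma cong_neg_iff:
  fixes a b :: nat
  shows "[a + (p - 1) * b = 0] (mod p) \<longleftrightarrow> [a = b] (mod p)"
proof -
  have e: "a + (p - 1) * b + b = a + p * b"
    using p_pos by (metis add.assoc add.commute mult_Suc Suc_diff_1)
  have "[a + (p - 1) * b = 0] (mod p) \<longleftrightarrow> [a + (p - 1) * b + b = b] (mod p)"
    by (metis add_0 cong_add_rcancel_nat)
  also have "\<dots> \<longleftrightarrow> [a + p * b = b] (mod p)" by (simp only: e)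
  also have "\<dots> \<longleftrightarrow> [a = b] (mod p)" by (simp add: cong_def)
  finally show ?thesis .
qed

lemma chi_orthogonality:
  assumes "x \<in> V" "y \<in> V"
  shows "(\<Sum>u\<in>V. chi u x * cnj (chi u y)) = (if x = y then of_nat N else 0)"
proof -
  define w where "w = (\<lambda>i. x i + (p - 1) * y i)"
  have "chi u x * cnj (chi u y) = ep p (dotp n w u)" for u
  proof -
    have "chi u x * cnj (chi u y) = chi u x * chi u (vneg p y)" by (simp add: chi_neg_x)
    also have "\<dots> = chi u (vadd p x (vneg p y))" by (simp add: chi_add_x)
    also have "\<dots> = chi u w"
      by (rule chi_cong_x) (simp add: w_def vneg_def cong_add cong_scalar_left vadd_cong vsmult_cong
          cong_trans[OF vadd_cong])
    finally show ?thesis by (simp add: chi_def dotp_def mult.commute)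
  qed
  then have "(\<Sum>u\<in>V. chi u x * cnj (chi u y)) = (\<Sum>u\<in>V. ep p (dotp n w u))" by simp
  also have "\<dots> = (if \<forall>i<n. p dvd w i then of_nat N else 0)" by (rule sum_ep_dotp[OF one_le_p])
  also have "(\<forall>i<n. p dvd w i) \<longleftrightarrow> x = y"
  proof
    assume "\<forall>i<n. p dvd w i"
    then have "\<And>i. i < n \<Longrightarrow> [x i = y i] (mod p)"
      using cong_neg_iff by (simp add: w_def cong_0_iff)
    then show "x = y" using Fpn_eqI_cong assms by blast
  next
    assume "x = y"
    then show "\<forall>i<n. p dvd w i" using cong_neg_iff by (simp add: w_def cong_0_iff[symmetric])
  qed
  finally show ?thesis .
qed

end

context Fpn_space begin

definition fourier :: "((nat \<Rightarrow> nat) \<Rightarrow> complex) \<Rightarrow> (nat \<Rightarrow> nat) \<Rightarrow> complex" where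
  "fourier f u = (\<Sum>x\<in>V. f x * cnj (chi u x)) / of_nat N"

lemma fourier_inversion:
  assumes x: "x \<in> V"
  shows "(\<Sum>u\<in>V. fourier f u * chi u x) = f x"
proof -
  have e: "fourier f u * chi u x = (\<Sum>y\<in>V. f y * (chi u x * cnj (chi u y))) / of_nat N" for u
  proof -
    have "(\<Sum>y\<in>V. f y * cnj (chi u y)) * chi u x = (\<Sum>y\<in>V. f y * (chi u x * cnj (chi u y)))"
      by (subst sum_distrib_right) (simp add: mult_ac)
    then show ?thesis by (simp add: fourier_def)
  qed
  have "(\<Sum>u\<in>V. fourier f u * chi u x) = (\<Sum>u\<in>V. \<Sum>y\<in>V. f y * (chi u x * cnj (chi u y))) / of_nat N"
    by (simp only: e sum_divide_distrib)
  also have "(\<Sum>u\<in>V. \<Sum>y\<in>V. f y * (chi u x * cnj (chi u y))) = (\<Sum>y\<in>V. f y * (\<Sum>u\<in>V. chi u x * cnj (chi u y)))"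
    by (subst sum.swap) (simp add: sum_distrib_left)
  also have "\<dots> = (\<Sum>y\<in>V. if y = x then f x * of_nat N else 0)"
    by (rule sum.cong[OF refl]) (auto simp: chi_orthogonality[OF x])
  also have "\<dots> = f x * of_nat N" using x by simp
  finally show ?thesis by simp
qed

lemma parseval:
  "(\<Sum>x\<in>V. f x * cnj (g x)) = of_nat N * (\<Sum>u\<in>V. fourier f u * cnj (fourier g u))"
proof -
  have "(\<Sum>x\<in>V. f x * cnj (g x)) = (\<Sum>x\<in>V. f x * cnj (\<Sum>u\<in>V. fourier g u * chi u x))"
    by (rule sum.cong[OF refl]) (simp add: fourier_inversion)
  also have "\<dots> = (\<Sum>x\<in>V. \<Sum>u\<in>V. cnj (fourier g u) * (f x * cnj (chi u x)))"
    by (simp add: sum_distrib_left mult_ac)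
  also have "\<dots> = (\<Sum>u\<in>V. cnj (fourier g u) * (\<Sum>x\<in>V. f x * cnj (chi u x)))"
    by (subst sum.swap) (simp add: sum_distrib_left)
  also have "\<dots> = (\<Sum>u\<in>V. of_nat N * (fourier f u * cnj (fourier g u)))"
    by (rule sum.cong[OF refl]) (simp add: fourier_def)
  finally show ?thesis by (simp add: sum_distrib_left)
qed

lemma parseval_norm:
  "(\<Sum>u\<in>V. (cmod (fourier f u))^2) = (\<Sum>x\<in>V. (cmod (f x))^2) / real N"
proof -
  have "complex_of_real (\<Sum>x\<in>V. (cmod (f x))^2) = of_nat N * complex_of_real (\<Sum>u\<in>V. (cmod (fourier f u))^2)"
  proof -
    have a: "(\<Sum>x\<in>V. f x * cnj (f x)) = complex_of_real (\<Sum>x\<in>V. (cmod (f x))^2)"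
      by (simp only: complex_norm_square of_real_sum)
    have b: "(\<Sum>u\<in>V. fourier f u * cnj (fourier f u)) = complex_of_real (\<Sum>u\<in>V. (cmod (fourier f u))^2)"
      by (simp only: complex_norm_square of_real_sum)
    show ?thesis using parseval[of f f] unfolding a b .
  qed
  then have "(\<Sum>x\<in>V. (cmod (f x))^2) = real N * (\<Sum>u\<in>V. (cmod (fourier f u))^2)"
    by (metis of_real_eq_iff of_real_mult of_real_of_nat_eq)
  then show ?thesis by simp
qed

lemma parseval_le_1:
  assumes "\<And>x. x \<in> V \<Longrightarrow> cmod (f x) \<le> 1"
  shows "(\<Sum>u\<in>V. (cmod (fourier f u))^2) \<le> 1"
proof -
  have "(\<Sum>x\<in>V. (cmod (f x))^2) \<le> (\<Sum>x\<in>V. 1)"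
    by (rule sum_mono) (use assms in \<open>simp add: power_le_one\<close>)
  then have "(\<Sum>x\<in>V. (cmod (f x))^2) \<le> real N" by simp
  then show ?thesis by (simp add: parseval_norm divide_le_eq_1)
qed

lemma fourier_mult_cnj_chi: "fourier (\<lambda>y. v y * cnj (chi t y)) u = fourier v (vadd p u t)"
  unfolding fourier_def by (simp add: chi_add_u mult_ac)

lemma fourier_mult_chi: "fourier (\<lambda>y. w y * chi t y) u = fourier w (vadd p u (vneg p t))"
  unfolding fourier_def by (simp add: chi_add_u chi_neg_u mult_ac)

lemma fourier_diff: "fourier (\<lambda>x. f x - g x) z = fourier f z - fourier g z"
  unfolding fourier_def by (simp add: sum_subtractf ring_distribs diff_divide_distrib)

section \<open>Counting three-term progressions\<close>

text \<open>Multiplication by \<open>p - 2\<close>, i.e. by \<open>-2\<close>: the frequencies of a 3-term progression count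
  are \<open>(g, -2g, g)\<close>.\<close>

definition vneg2 :: "(nat \<Rightarrow> nat) \<Rightarrow> (nat \<Rightarrow> nat)" where
  "vneg2 u = vsmult p (p - 2) u"

lemma vneg2_in_Fpn: "u \<in> V \<Longrightarrow> vneg2 u \<in> V" by (simp add: vneg2_def)

lemma coprime_p_minus_2: "coprime (p - 2) p" using p_ge3 by (intro coprime_less) auto

lemma sum_vneg2: "(\<Sum>u\<in>V. f (vneg2 u)) = (\<Sum>u\<in>V. f u)"
  unfolding vneg2_def by (rule sum_Fpn_scale[OF p_pos coprime_p_minus_2])

lemma cong_two_iff:
  fixes a b :: nat
  shows "[a + 2 * b = 0] (mod p) \<longleftrightarrow> [a = (p - 2) * b] (mod p)"
proof -
  have e: "a + 2 * b + (p - 2) * b = a + p * b"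
    using p_ge3 by (simp add: algebra_simps)
  have "[a + 2 * b = 0] (mod p) \<longleftrightarrow> [a + 2 * b + (p - 2) * b = 0 + (p - 2) * b] (mod p)"
    by (rule cong_add_rcancel_nat[symmetric])
  also have "\<dots> \<longleftrightarrow> [a + p * b = (p - 2) * b] (mod p)" by (simp only: e add_0)
  also have "\<dots> \<longleftrightarrow> [a = (p - 2) * b] (mod p)" by (simp add: cong_def)
  finally show ?thesis .
qed

lemma sum_chi_mult_chi_square:
  assumes b: "b \<in> V" and c: "c \<in> V"
  shows "(\<Sum>d\<in>V. chi b d * chi c d ^ 2) = (if b = vneg2 c then of_nat N else 0)"
proof -
  define z where "z = vadd p b (vsmult p 2 c)"
  have "chi b d * chi c d ^ 2 = ep p (dotp n z d)" for d
    by (simp add: z_def chi_add_u chi_smult_u chi_def[symmetric])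
  then have "(\<Sum>d\<in>V. chi b d * chi c d ^ 2) = (if \<forall>i<n. p dvd z i then of_nat N else 0)"
    using sum_ep_dotp[OF one_le_p, of n z] by simp
  also have "(\<forall>i<n. p dvd z i) \<longleftrightarrow> b = vneg2 c"
  proof -
    have zc: "[z i = b i + 2 * c i] (mod p)" for i
    proof -
      have "[z i = b i + vsmult p 2 c i] (mod p)" unfolding z_def by (rule vadd_cong)
      moreover have "[b i + vsmult p 2 c i = b i + 2 * c i] (mod p)" by (rule cong_add[OF cong_refl vsmult_cong])
      ultimately show ?thesis by (rule cong_trans)
    qed
    have rc: "[vneg2 c i = (p - 2) * c i] (mod p)" for i unfolding vneg2_def by (rule vsmult_cong)
    have "(p dvd z i) \<longleftrightarrow> [b i = (p - 2) * c i] (mod p)" for i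
      using zc[of i] cong_two_iff[of "b i" "c i"] by (metis cong_0_iff cong_trans cong_sym)
    moreover have "b = vneg2 c \<longleftrightarrow> (\<forall>i<n. [b i = (p - 2) * c i] (mod p))"
    proof
      assume "b = vneg2 c" then show "\<forall>i<n. [b i = (p - 2) * c i] (mod p)" using rc by simp
    next
      assume "\<forall>i<n. [b i = (p - 2) * c i] (mod p)"
      then show "b = vneg2 c" using rc Fpn_eqI_cong[OF b vneg2_in_Fpn[OF c]] by (metis cong_sym cong_trans)
    qed
    ultimately show ?thesis by simp
  qed
  finally show ?thesis .
qed

lemma chi_pow_p_minus_1: "chi c x ^ (p - 1) = cnj (chi c x)"
  by (simp add: chi_smult_x[symmetric] chi_neg_x[symmetric] vneg_def)

lemma sum_mult_chi_vneg2:
  "(\<Sum>x\<in>V. a x * (chi (vneg2 c) x * chi c x)) = of_nat N * fourier a c"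
proof -
  have "chi (vneg2 c) x * chi c x = cnj (chi c x)" for x
  proof -
    have "chi (vneg2 c) x * chi c x = chi c x ^ (p - 2) * chi c x"
      by (simp add: vneg2_def chi_smult_u)
    also have "\<dots> = chi c x ^ (p - 1)"
    proof -
      have e: "p - 1 = Suc (p - 2)" using p_ge3 by simp
      show ?thesis by (simp only: e power_Suc2)
    qed
    finally show ?thesis by (simp only: chi_pow_p_minus_1)
  qed
  then show ?thesis by (simp add: fourier_def)
qed

definition ap3_sum :: "((nat \<Rightarrow> nat) \<Rightarrow> complex) \<Rightarrow> ((nat \<Rightarrow> nat) \<Rightarrow> complex) \<Rightarrow> ((nat \<Rightarrow> nat) \<Rightarrow> complex) \<Rightarrow> complex" where
  "ap3_sum a b c = (\<Sum>x\<in>V. \<Sum>d\<in>V. a x * b (vadd p x d) * c (vadd p x (vsmult p 2 d)))"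

lemma ap3_sum_fourier:
  "ap3_sum a b c = of_nat N ^ 2 * (\<Sum>g\<in>V. fourier a g * fourier b (vneg2 g) * fourier c g)"
proof -
  have pt: "a x * b (vadd p x d) * c (vadd p x (vsmult p 2 d))
      = (\<Sum>u\<in>V. \<Sum>g\<in>V. (fourier b u * fourier c g) * ((a x * (chi u x * chi g x)) * (chi u d * chi g d ^ 2)))"
    if x: "x \<in> V" and d: "d \<in> V" for x d
  proof -
    have "b (vadd p x d) * c (vadd p x (vsmult p 2 d))
        = (\<Sum>u\<in>V. fourier b u * chi u (vadd p x d)) * (\<Sum>g\<in>V. fourier c g * chi g (vadd p x (vsmult p 2 d)))"
      using x d by (simp add: fourier_inversion)
    also have "\<dots> = (\<Sum>u\<in>V. \<Sum>g\<in>V. (fourier b u * chi u (vadd p x d)) * (fourier c g * chi g (vadd p x (vsmult p 2 d))))"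
      by (rule sum_product)
    finally have "a x * (b (vadd p x d) * c (vadd p x (vsmult p 2 d)))
        = (\<Sum>u\<in>V. \<Sum>g\<in>V. a x * ((fourier b u * chi u (vadd p x d)) * (fourier c g * chi g (vadd p x (vsmult p 2 d)))))"
      by (simp add: sum_distrib_left)
    also have "\<dots> = (\<Sum>u\<in>V. \<Sum>g\<in>V. (fourier b u * fourier c g) * ((a x * (chi u x * chi g x)) * (chi u d * chi g d ^ 2)))"
      by (simp add: chi_add_x chi_smult_x mult_ac)
    finally show ?thesis by (simp add: mult_ac)
  qed
  have "ap3_sum a b c = (\<Sum>x\<in>V. \<Sum>d\<in>V. \<Sum>u\<in>V. \<Sum>g\<in>V. (fourier b u * fourier c g) * ((a x * (chi u x * chi g x)) * (chi u d * chi g d ^ 2)))"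
    unfolding ap3_sum_def by (rule sum.cong[OF refl], rule sum.cong[OF refl], rule pt)
  also have "\<dots> = (\<Sum>u\<in>V. \<Sum>g\<in>V. \<Sum>x\<in>V. \<Sum>d\<in>V. (fourier b u * fourier c g) * ((a x * (chi u x * chi g x)) * (chi u d * chi g d ^ 2)))"
    by (rule sum_swap_outer_pairs)
  also have "\<dots> = (\<Sum>u\<in>V. \<Sum>g\<in>V. (fourier b u * fourier c g) * ((\<Sum>x\<in>V. a x * (chi u x * chi g x)) * (\<Sum>d\<in>V. chi u d * chi g d ^ 2)))"
    by (simp only: sum_sum_mult_product)
  also have "\<dots> = (\<Sum>u\<in>V. \<Sum>g\<in>V. if u = vneg2 g then (fourier b u * fourier c g) * ((\<Sum>x\<in>V. a x * (chi u x * chi g x)) * of_nat N) else 0)"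
    by (rule sum.cong[OF refl], rule sum.cong[OF refl]) (simp add: sum_chi_mult_chi_square)
  also have "\<dots> = (\<Sum>g\<in>V. \<Sum>u\<in>V. if u = vneg2 g then (fourier b u * fourier c g) * ((\<Sum>x\<in>V. a x * (chi u x * chi g x)) * of_nat N) else 0)"
    by (rule sum.swap)
  also have "\<dots> = (\<Sum>g\<in>V. (fourier b (vneg2 g) * fourier c g) * ((\<Sum>x\<in>V. a x * (chi (vneg2 g) x * chi g x)) * of_nat N))"
    by (rule sum.cong[OF refl]) (simp add: vneg2_in_Fpn)
  also have "\<dots> = (\<Sum>g\<in>V. (fourier b (vneg2 g) * fourier c g) * (of_nat N * fourier a g * of_nat N))"
    by (simp add: sum_mult_chi_vneg2)
  finally show ?thesis by (simp add: sum_distrib_left power2_eq_square mult_ac)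
qed

lemma ap3_sum_bound:
  assumes a1: "\<And>x. x \<in> V \<Longrightarrow> cmod (a x) \<le> 1"
      and b1: "\<And>x. x \<in> V \<Longrightarrow> cmod (b x) \<le> 1"
      and c1: "\<And>x. x \<in> V \<Longrightarrow> cmod (c x) \<le> 1"
      and small: "(\<forall>u\<in>V. cmod (fourier a u) \<le> eta) \<or> (\<forall>u\<in>V. cmod (fourier b u) \<le> eta) \<or> (\<forall>u\<in>V. cmod (fourier c u) \<le> eta)"
  shows "cmod (ap3_sum a b c) \<le> real N ^ 2 * eta"
proof -
  define A where "A g = cmod (fourier a g)" for g
  define B where "B g = cmod (fourier b (vneg2 g))" for g
  define C where "C g = cmod (fourier c g)" for g
  have SA: "(\<Sum>g\<in>V. (A g)^2) \<le> 1" unfolding A_def by (rule parseval_le_1[OF a1])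
  have SB: "(\<Sum>g\<in>V. (B g)^2) \<le> 1" unfolding B_def using parseval_le_1[OF b1] sum_vneg2[of "\<lambda>u. (cmod (fourier b u))^2"] by simp
  have SC: "(\<Sum>g\<in>V. (C g)^2) \<le> 1" unfolding C_def by (rule parseval_le_1[OF c1])
  have "cmod (ap3_sum a b c) = real N ^ 2 * cmod (\<Sum>g\<in>V. fourier a g * fourier b (vneg2 g) * fourier c g)"
    by (simp add: ap3_sum_fourier norm_mult norm_power)
  also have "cmod (\<Sum>g\<in>V. fourier a g * fourier b (vneg2 g) * fourier c g) \<le> (\<Sum>g\<in>V. A g * B g * C g)"
    unfolding A_def B_def C_def by (rule order_trans[OF norm_sum]) (simp add: norm_mult)
  also have "(\<Sum>g\<in>V. A g * B g * C g) \<le> eta"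
  proof -
    have eta0: "0 \<le> eta" using small vzero_in_Fpn[OF p_pos, of n] by (meson norm_ge_zero order_trans)
    consider "\<forall>u\<in>V. cmod (fourier a u) \<le> eta" | "\<forall>u\<in>V. cmod (fourier b u) \<le> eta"
      | "\<forall>u\<in>V. cmod (fourier c u) \<le> eta"
      using small by blast
    then show ?thesis
    proof cases
      case 1
      then show ?thesis
        by (intro sum_mult3_le[OF _ eta0 _ _ SB SC]) (auto simp: A_def B_def C_def)
    next
      case 2
      then have "(\<Sum>g\<in>V. B g * A g * C g) \<le> eta"
        using vneg2_in_Fpn by (intro sum_mult3_le[OF _ eta0 _ _ SA SC]) (auto simp: A_def B_def C_def)
      then show ?thesis by (simp add: mult_ac)
    next
      case 3
      then have "(\<Sum>g\<in>V. C g * A g * B g) \<le> eta"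
        by (intro sum_mult3_le[OF _ eta0 _ _ SA SB]) (auto simp: A_def B_def C_def)
      then show ?thesis by (simp add: mult_ac)
    qed
  qed
  finally show ?thesis by (simp add: mult_left_mono)
qed

end

context Fpn_subspace begin

lemma sum_chi_H: "(\<Sum>h\<in>H. chi u h) = (if \<forall>h\<in>H. chi u h = 1 then of_nat (card H) else 0)"
proof (cases "\<forall>h\<in>H. chi u h = 1")
  case True then show ?thesis by simp
next
  case False
  then obtain h0 where h0: "h0 \<in> H" "chi u h0 \<noteq> 1" by blast
  have "(\<Sum>h\<in>H. chi u h) = (\<Sum>h\<in>H. chi u (vadd p h0 h))" using sum_H_translate[OF h0(1), of "chi u"] by simp
  also have "\<dots> = chi u h0 * (\<Sum>h\<in>H. chi u h)" by (simp add: chi_add_x sum_distrib_left)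
  finally have "(1 - chi u h0) * (\<Sum>h\<in>H. chi u h) = 0" by (simp add: algebra_simps)
  then show ?thesis using False h0 by auto
qed

lemma avg_cnj_chi: "avg (\<lambda>y. cnj (chi u y)) x = cnj (chi u x) * (if \<forall>h\<in>H. chi u h = 1 then 1 else 0)"
proof -
  have "avg (\<lambda>y. cnj (chi u y)) x = cnj (chi u x) * cnj (\<Sum>h\<in>H. chi u h) / of_nat (card H)"
    unfolding avg_def by (simp add: chi_add_x sum_distrib_left)
  then show ?thesis using card_H_pos H_nonempty by (simp add: sum_chi_H)
qed

lemma fourier_avg: "fourier (avg f) u = (if \<forall>h\<in>H. chi u h = 1 then fourier f u else 0)"
proof -
  have "fourier (avg f) u = (\<Sum>x\<in>V. f x * avg (\<lambda>y. cnj (chi u y)) x) / of_nat N"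
    unfolding fourier_def by (simp add: avg_self_adjoint)
  then show ?thesis by (cases "\<forall>h\<in>H. chi u h = 1") (auto simp: avg_cnj_chi fourier_def)
qed

definition perp_weight :: "(nat \<Rightarrow> nat) \<Rightarrow> real" where
  "perp_weight t = (if \<forall>h\<in>H. chi t h = 1 then real (card H) / real N else 0)"

lemma perp_weight_nonneg: "0 \<le> perp_weight t" by (simp add: perp_weight_def)

lemma fourier_indicator_H: "fourier (\<lambda>x. if x \<in> H then 1 else 0) t = complex_of_real (perp_weight t)"
proof -
  have "(\<Sum>x\<in>V. (if x \<in> H then 1 else 0) * cnj (chi t x)) = (\<Sum>x\<in>V. if x \<in> H then cnj (chi t x) else 0)"
    by (rule sum.cong) auto
  also have "\<dots> = (\<Sum>x\<in>V \<inter> H. cnj (chi t x))" by (simp add: sum.inter_restrict)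
  also have "V \<inter> H = H" using H_subset by blast
  also have "(\<Sum>x\<in>H. cnj (chi t x)) = cnj (\<Sum>x\<in>H. chi t x)" by simp
  finally show ?thesis unfolding fourier_def perp_weight_def by (simp add: sum_chi_H)
qed

lemma indicator_H_expansion: "d \<in> V \<Longrightarrow> (if d \<in> H then 1 else 0) = (\<Sum>t\<in>V. complex_of_real (perp_weight t) * chi t d)"
  using fourier_inversion[of d "\<lambda>x. if x \<in> H then 1 else 0"] by (simp add: fourier_indicator_H)

lemma perp_weight_sum: "(\<Sum>t\<in>V. perp_weight t) = 1"
proof -
  have "(1::complex) = (\<Sum>t\<in>V. complex_of_real (perp_weight t))" using indicator_H_expansion[OF vzero_in_Fpn[OF p_pos]] by simp
  then have "complex_of_real (\<Sum>t\<in>V. perp_weight t) = 1" by (simp add: of_real_sum)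
  then show ?thesis by (metis of_real_eq_1_iff)
qed

definition ap3_sum_in :: "((nat \<Rightarrow> nat) \<Rightarrow> 'a::comm_ring_1) \<Rightarrow> ((nat \<Rightarrow> nat) \<Rightarrow> 'a) \<Rightarrow> ((nat \<Rightarrow> nat) \<Rightarrow> 'a) \<Rightarrow> 'a" where
  "ap3_sum_in u v w = (\<Sum>x\<in>V. \<Sum>d\<in>H. u x * v (vadd p x d) * w (vadd p x (vsmult p 2 d)))"

lemma ap3_sum_in_of_real:
  "complex_of_real (ap3_sum_in u v w) = ap3_sum_in (\<lambda>x. complex_of_real (u x)) (\<lambda>x. complex_of_real (v x)) (\<lambda>x. complex_of_real (w x))"
  by (simp add: ap3_sum_in_def of_real_sum)

text \<open>Restricting the difference to \<open>H\<close> inserts the indicator of \<open>H\<close>, whose Fourier expansion is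
  supported on the characters trivial on \<open>H\<close>; each such character \<open>t\<close> is absorbed by twisting the
  second and third functions by \<open>t\<close>.\<close>

lemma ap3_sum_in_expand:
  fixes u v w :: "(nat \<Rightarrow> nat) \<Rightarrow> complex"
  shows "ap3_sum_in u v w = (\<Sum>t\<in>V. complex_of_real (perp_weight t)
           * ap3_sum u (\<lambda>y. v y * cnj (chi t y)) (\<lambda>y. w y * chi t y))"
proof -
  define F where "F x d = u x * v (vadd p x d) * w (vadd p x (vsmult p 2 d))" for x d
  have "ap3_sum_in u v w = (\<Sum>x\<in>V. \<Sum>d\<in>V. (if d \<in> H then 1 else 0) * F x d)"
    unfolding ap3_sum_in_def F_def by (simp add: sum_H_eq_indicator)
  also have "\<dots> = (\<Sum>x\<in>V. \<Sum>d\<in>V. \<Sum>t\<in>V. complex_of_real (perp_weight t) * (chi t d * F x d))"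
    by (intro sum.cong refl) (simp add: indicator_H_expansion sum_distrib_right mult.assoc)
  also have "\<dots> = (\<Sum>t\<in>V. \<Sum>x\<in>V. \<Sum>d\<in>V. complex_of_real (perp_weight t) * (chi t d * F x d))"
    by (subst sum.swap, rule sum.cong[OF refl], rule sum.swap)
  also have "\<dots> = (\<Sum>t\<in>V. complex_of_real (perp_weight t)
                 * ap3_sum u (\<lambda>y. v y * cnj (chi t y)) (\<lambda>y. w y * chi t y))"
  proof (rule sum.cong[OF refl])
    fix t
    have "chi t d * F x d = u x * (v (vadd p x d) * cnj (chi t (vadd p x d)))
        * (w (vadd p x (vsmult p 2 d)) * chi t (vadd p x (vsmult p 2 d)))" for x d
      unfolding F_def chi_progression[of t x d, symmetric] by (simp add: mult_ac)
    then show "(\<Sum>x\<in>V. \<Sum>d\<in>V. complex_of_real (perp_weight t) * (chi t d * F x d))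
        = complex_of_real (perp_weight t) * ap3_sum u (\<lambda>y. v y * cnj (chi t y)) (\<lambda>y. w y * chi t y)"
      unfolding ap3_sum_def by (simp add: sum_distrib_left)
  qed
  finally show ?thesis .
qed

lemma ap3_sum_in_bound:
  fixes u v w :: "(nat \<Rightarrow> nat) \<Rightarrow> complex"
  assumes u1: "\<And>x. x \<in> V \<Longrightarrow> cmod (u x) \<le> 1"
      and v1: "\<And>x. x \<in> V \<Longrightarrow> cmod (v x) \<le> 1"
      and w1: "\<And>x. x \<in> V \<Longrightarrow> cmod (w x) \<le> 1"
      and small: "(\<forall>z\<in>V. cmod (fourier u z) \<le> eta) \<or> (\<forall>z\<in>V. cmod (fourier v z) \<le> eta) \<or> (\<forall>z\<in>V. cmod (fourier w z) \<le> eta)"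
  shows "cmod (ap3_sum_in u v w) \<le> real N ^ 2 * eta"
proof -
  have L: "cmod (ap3_sum u (\<lambda>y. v y * cnj (chi t y)) (\<lambda>y. w y * chi t y)) \<le> real N ^ 2 * eta" if t: "t \<in> V" for t
  proof (rule ap3_sum_bound)
    show "cmod (u x) \<le> 1" if "x \<in> V" for x using u1 that .
    show "cmod (v x * cnj (chi t x)) \<le> 1" if "x \<in> V" for x using v1 that by (simp add: norm_mult)
    show "cmod (w x * chi t x) \<le> 1" if "x \<in> V" for x using w1 that by (simp add: norm_mult)
    show "(\<forall>z\<in>V. cmod (fourier u z) \<le> eta) \<or> (\<forall>z\<in>V. cmod (fourier (\<lambda>y. v y * cnj (chi t y)) z) \<le> eta) \<or>
          (\<forall>z\<in>V. cmod (fourier (\<lambda>y. w y * chi t y) z) \<le> eta)"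
      using small t by (auto simp: fourier_mult_cnj_chi fourier_mult_chi)
  qed
  have "cmod (ap3_sum_in u v w) \<le> (\<Sum>t\<in>V. cmod (complex_of_real (perp_weight t) * ap3_sum u (\<lambda>y. v y * cnj (chi t y)) (\<lambda>y. w y * chi t y)))"
    unfolding ap3_sum_in_expand by (rule norm_sum)
  also have "\<dots> \<le> (\<Sum>t\<in>V. perp_weight t * (real N ^ 2 * eta))"
  proof (rule sum_mono)
    fix t assume t: "t \<in> V"
    have "cmod (complex_of_real (perp_weight t) * ap3_sum u (\<lambda>y. v y * cnj (chi t y)) (\<lambda>y. w y * chi t y))
        = perp_weight t * cmod (ap3_sum u (\<lambda>y. v y * cnj (chi t y)) (\<lambda>y. w y * chi t y))"
      by (simp add: norm_mult abs_of_nonneg[OF perp_weight_nonneg])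
    also have "\<dots> \<le> perp_weight t * (real N ^ 2 * eta)" by (rule mult_left_mono[OF L[OF t] perp_weight_nonneg])
    finally show "cmod (complex_of_real (perp_weight t) * ap3_sum u (\<lambda>y. v y * cnj (chi t y)) (\<lambda>y. w y * chi t y))
        \<le> perp_weight t * (real N ^ 2 * eta)" .
  qed
  also have "\<dots> = real N ^ 2 * eta" by (simp add: sum_distrib_right[symmetric] perp_weight_sum)
  finally show ?thesis .
qed

lemma ap3_sum_in_add_expand:
  fixes f g :: "(nat \<Rightarrow> nat) \<Rightarrow> 'a::comm_ring_1"
  shows "ap3_sum_in (\<lambda>x. f x + g x) (\<lambda>x. f x + g x) (\<lambda>x. f x + g x)
    = ap3_sum_in f f f + (ap3_sum_in g f f + ap3_sum_in f g f + ap3_sum_in f f g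
      + ap3_sum_in g g f + ap3_sum_in g f g + ap3_sum_in f g g + ap3_sum_in g g g)"
  unfolding ap3_sum_in_def by (simp add: ring_distribs sum.distrib add_ac)

lemma ap3_sum_in_real_bound:
  fixes u v w :: "(nat \<Rightarrow> nat) \<Rightarrow> real"
  assumes "\<And>x. x \<in> V \<Longrightarrow> \<bar>u x\<bar> \<le> 1" "\<And>x. x \<in> V \<Longrightarrow> \<bar>v x\<bar> \<le> 1" "\<And>x. x \<in> V \<Longrightarrow> \<bar>w x\<bar> \<le> 1"
      and small: "(\<forall>z\<in>V. cmod (fourier (\<lambda>x. complex_of_real (u x)) z) \<le> eta) \<or>
                  (\<forall>z\<in>V. cmod (fourier (\<lambda>x. complex_of_real (v x)) z) \<le> eta) \<or>
                  (\<forall>z\<in>V. cmod (fourier (\<lambda>x. complex_of_real (w x)) z) \<le> eta)"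
  shows "\<bar>ap3_sum_in u v w\<bar> \<le> real N ^ 2 * eta"
proof -
  have "\<bar>ap3_sum_in u v w\<bar> = cmod (complex_of_real (ap3_sum_in u v w))" by simp
  also have "\<dots> = cmod (ap3_sum_in (\<lambda>x. complex_of_real (u x)) (\<lambda>x. complex_of_real (v x))
                                    (\<lambda>x. complex_of_real (w x)))"
    by (simp only: ap3_sum_in_of_real)
  also have "\<dots> \<le> real N ^ 2 * eta"
    by (rule ap3_sum_in_bound) (use assms in auto)
  finally show ?thesis .
qed

lemma ap3_sum_in_invariant_2:
  fixes F :: "(nat \<Rightarrow> nat) \<Rightarrow> real"
  assumes "\<And>x d. x \<in> V \<Longrightarrow> d \<in> H \<Longrightarrow> F (vadd p x d) = F x"
  shows "ap3_sum_in u F w = (\<Sum>x\<in>V. u x * F x * (\<Sum>d\<in>H. w (vadd p x (vsmult p 2 d))))"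
  unfolding ap3_sum_in_def by (rule sum.cong[OF refl]) (simp add: assms sum_distrib_left mult_ac)

lemma ap3_sum_in_invariant_3:
  fixes F :: "(nat \<Rightarrow> nat) \<Rightarrow> real"
  assumes "\<And>x d. x \<in> V \<Longrightarrow> d \<in> H \<Longrightarrow> F (vadd p x d) = F x"
  shows "ap3_sum_in u v F = (\<Sum>x\<in>V. u x * F x * (\<Sum>d\<in>H. v (vadd p x d)))"
  unfolding ap3_sum_in_def by (rule sum.cong[OF refl]) (simp add: assms sum_distrib_left mult_ac)

end

section \<open>Structured, small and uniform parts\<close>

locale coset_decomposition = nested_subspaces +
  fixes a :: "(nat \<Rightarrow> nat) \<Rightarrow> real"
  assumes a_nonneg: "\<And>x. 0 \<le> a x" and a_le_1: "\<And>x. a x \<le> 1"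
begin

definition "f_str = coarse.avg a"
definition "f_fine = fine.avg a"
definition "f_sml x = f_fine x - f_str x"
definition "f_unf x = a x - f_fine x"

lemma a_split: "a = (\<lambda>x. f_fine x + f_unf x)" by (simp add: f_unf_def)
lemma f_fine_split: "f_fine = (\<lambda>x. f_str x + f_sml x)" by (simp add: f_sml_def)

lemma f_str_01: "0 \<le> f_str x" "f_str x \<le> 1"
  unfolding f_str_def using coarse.avg_bounds a_nonneg a_le_1 by auto
lemma f_fine_01: "0 \<le> f_fine x" "f_fine x \<le> 1"
  unfolding f_fine_def using fine.avg_bounds a_nonneg a_le_1 by auto
lemma abs_f_sml_le_1: "\<bar>f_sml x\<bar> \<le> 1"
  unfolding f_sml_def using f_str_01 f_fine_01 by (smt (verit))
lemma abs_f_unf_le_1: "\<bar>f_unf x\<bar> \<le> 1"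
  unfolding f_unf_def using a_nonneg a_le_1 f_fine_01 by (smt (verit))

lemma f_str_translate: "x \<in> V \<Longrightarrow> d \<in> H \<Longrightarrow> f_str (vadd p x d) = f_str x"
  unfolding f_str_def by (rule coarse.avg_translate_H)

lemma f_str_double: "x \<in> V \<Longrightarrow> d \<in> H \<Longrightarrow> f_str (vadd p x (vsmult p 2 d)) = f_str x"
  using f_str_translate coarse.double_in_H by blast

lemma avg_f_sml: "x \<in> V \<Longrightarrow> coarse.avg f_sml x = 0"
proof -
  assume x: "x \<in> V"
  have "coarse.avg f_sml x = coarse.avg f_fine x - coarse.avg f_str x"
    unfolding f_sml_def by (rule coarse.avg_diff)
  also have "coarse.avg f_fine x = coarse.avg a x" unfolding f_fine_def by (rule avg_avg_finer[OF x])
  also have "coarse.avg f_str x = coarse.avg a x" unfolding f_str_def by (rule coarse.avg_avg[OF x])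
  finally show ?thesis by simp
qed

lemma sum_f_sml_translate: "x \<in> V \<Longrightarrow> (\<Sum>d\<in>H. f_sml (vadd p x d)) = 0"
  using avg_f_sml coarse.card_H_pos coarse.H_nonempty by (simp add: coarse.avg_def)

lemma sum_f_sml_double: "x \<in> V \<Longrightarrow> (\<Sum>d\<in>H. f_sml (vadd p x (vsmult p 2 d))) = 0"
  using sum_f_sml_translate coarse.sum_H_double[of "\<lambda>e. f_sml (vadd p x e)"] by simp

lemma sum_f_sml_mult_invariant:
  assumes phi: "\<And>x d. x \<in> V \<Longrightarrow> d \<in> H \<Longrightarrow> phi (vadd p x d) = phi x"
  shows "(\<Sum>x\<in>V. f_sml x * phi x) = 0"
proof -
  have "coarse.avg phi x = phi x" if "x \<in> V" for x
    using that phi coarse.H_nonempty by (simp add: coarse.avg_def)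
  then have "(\<Sum>x\<in>V. f_sml x * phi x) = (\<Sum>x\<in>V. f_sml x * coarse.avg phi x)" by simp
  also have "\<dots> = (\<Sum>x\<in>V. coarse.avg f_sml x * phi x)" by (simp add: coarse.avg_self_adjoint)
  also have "\<dots> = 0" by (simp add: avg_f_sml)
  finally show ?thesis .
qed

lemma sum_f_sml_sq: "(\<Sum>x\<in>V. (f_sml x)^2) = (\<Sum>x\<in>V. (f_fine x)^2) - (\<Sum>x\<in>V. (f_str x)^2)"
proof -
  have o: "(\<Sum>x\<in>V. f_sml x * f_str x) = 0"
    by (rule sum_f_sml_mult_invariant) (simp add: f_str_translate)
  have "(\<Sum>x\<in>V. (f_sml x)^2) = (\<Sum>x\<in>V. f_sml x * f_fine x) - (\<Sum>x\<in>V. f_sml x * f_str x)"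
    by (simp add: power2_eq_square sum_subtractf[symmetric] f_sml_def algebra_simps)
  moreover have "(\<Sum>x\<in>V. (f_fine x)^2) - (\<Sum>x\<in>V. (f_str x)^2)
      = (\<Sum>x\<in>V. f_sml x * f_fine x) + (\<Sum>x\<in>V. f_sml x * f_str x)"
    by (simp add: power2_eq_square sum_subtractf[symmetric] sum.distrib[symmetric] f_sml_def algebra_simps)
  ultimately show ?thesis using o by simp
qed

lemma ap3_sum_in_str_sml_sml: "coarse.ap3_sum_in f_str f_sml f_sml = 0"
proof -
  have "coarse.ap3_sum_in f_str f_sml f_sml
      = (\<Sum>d\<in>H. \<Sum>x\<in>V. f_str (vadd p x d) * f_sml (vadd p x d) * f_sml (vadd p (vadd p x d) d))"
    unfolding coarse.ap3_sum_in_def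
    by (subst sum.swap) (rule sum.cong[OF refl], rule sum.cong[OF refl],
        simp add: f_str_translate vsmult_2_eq_vadd vadd_assoc coarse.H_in_Fpn)
  also have "\<dots> = (\<Sum>d\<in>H. \<Sum>y\<in>V. f_str y * f_sml y * f_sml (vadd p y d))"
    by (rule sum.cong[OF refl]) (rule sum_Fpn_translate[OF p_pos], erule coarse.H_in_Fpn)
  also have "\<dots> = (\<Sum>y\<in>V. f_str y * f_sml y * (\<Sum>d\<in>H. f_sml (vadd p y d)))"
    by (subst sum.swap) (simp add: sum_distrib_left)
  also have "\<dots> = 0" by (simp add: sum_f_sml_translate)
  finally show ?thesis .
qed

lemma ap3_sum_in_sml_ge: "- (real (card H) * (\<Sum>x\<in>V. (f_sml x)^2)) \<le> coarse.ap3_sum_in f_sml f_sml f_sml"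
proof -
  have pt: "- ((f_sml x)^2 + (f_sml y)^2) / 2 \<le> f_sml x * f_sml y * f_sml z" for x y z
  proof -
    have "\<bar>f_sml x * f_sml y * f_sml z\<bar> \<le> \<bar>f_sml x * f_sml y\<bar>"
      using abs_f_sml_le_1[of z] by (simp add: abs_mult mult_left_le)
    moreover have "0 \<le> (\<bar>f_sml x\<bar> - \<bar>f_sml y\<bar>)^2" by simp
    then have "\<bar>f_sml x * f_sml y\<bar> \<le> ((f_sml x)^2 + (f_sml y)^2) / 2"
      by (simp add: abs_mult power2_eq_square algebra_simps)
    ultimately show ?thesis by (simp add: abs_le_iff)
  qed
  have "(\<Sum>x\<in>V. \<Sum>d\<in>H. (f_sml (vadd p x d))^2) = (\<Sum>d\<in>H. \<Sum>x\<in>V. (f_sml x)^2)"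
    by (subst sum.swap) (rule sum.cong[OF refl], rule sum_Fpn_translate[OF p_pos], erule coarse.H_in_Fpn)
  moreover have "(\<Sum>x\<in>V. \<Sum>d\<in>H. (f_sml x)^2) = real (card H) * (\<Sum>x\<in>V. (f_sml x)^2)"
    by (simp add: sum_distrib_left)
  ultimately have "- (real (card H) * (\<Sum>x\<in>V. (f_sml x)^2))
      = - ((\<Sum>x\<in>V. \<Sum>d\<in>H. (f_sml x)^2) + (\<Sum>x\<in>V. \<Sum>d\<in>H. (f_sml (vadd p x d))^2)) / 2"
    by simp
  also have "\<dots> = (\<Sum>x\<in>V. \<Sum>d\<in>H. - ((f_sml x)^2 + (f_sml (vadd p x d))^2) / 2)"
    by (simp only: sum_divide_distrib[symmetric] sum_negf sum.distrib)
  also have "\<dots> \<le> coarse.ap3_sum_in f_sml f_sml f_sml"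
    unfolding coarse.ap3_sum_in_def by (intro sum_mono pt)
  finally show ?thesis .
qed

text \<open>The mixed terms vanish because \<open>f_str\<close> is constant on cosets of \<open>H\<close> while \<open>f_sml\<close>
  averages to zero on each of them.\<close>

lemma ap3_sum_in_fine_ge:
  "real (card H) * (\<Sum>x\<in>V. f_str x ^ 3) - real (card H) * (\<Sum>x\<in>V. (f_sml x)^2)
    \<le> coarse.ap3_sum_in f_fine f_fine f_fine"
proof -
  have "coarse.ap3_sum_in f_str f_str f_str = real (card H) * (\<Sum>x\<in>V. f_str x ^ 3)"
    unfolding coarse.ap3_sum_in_def
    by (simp add: f_str_translate f_str_double sum_distrib_left power3_eq_cube)
  moreover have "coarse.ap3_sum_in f_sml f_str f_str = 0"
  proof -
    have "coarse.ap3_sum_in f_sml f_str f_str = real (card H) * (\<Sum>x\<in>V. f_sml x * (f_str x * f_str x))"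
      unfolding coarse.ap3_sum_in_def
      by (simp add: f_str_translate f_str_double sum_distrib_left mult_ac)
    also have "(\<Sum>x\<in>V. f_sml x * (f_str x * f_str x)) = 0"
      by (rule sum_f_sml_mult_invariant) (simp add: f_str_translate)
    finally show ?thesis by simp
  qed
  moreover have "coarse.ap3_sum_in f_str f_sml f_str = 0" "coarse.ap3_sum_in f_sml f_sml f_str = 0"
    by (simp_all add: coarse.ap3_sum_in_invariant_3[OF f_str_translate] sum_f_sml_translate)
  moreover have "coarse.ap3_sum_in f_str f_str f_sml = 0" "coarse.ap3_sum_in f_sml f_str f_sml = 0"
    by (simp_all add: coarse.ap3_sum_in_invariant_2[OF f_str_translate] sum_f_sml_double)
  ultimately show ?thesis
    using coarse.ap3_sum_in_add_expand[of f_str f_sml, folded f_fine_split]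
      ap3_sum_in_str_sml_sml ap3_sum_in_sml_ge by simp
qed

lemma ap3_sum_in_lower_bound:
  assumes small: "\<forall>z\<in>V. cmod (fourier (\<lambda>x. complex_of_real (f_unf x)) z) \<le> eta"
  shows "real (card H) * (\<Sum>x\<in>V. f_str x ^ 3) - real (card H) * (\<Sum>x\<in>V. (f_sml x)^2)
      - 7 * (real N ^ 2 * eta) \<le> coarse.ap3_sum_in a a a"
proof -
  let ?T = "coarse.ap3_sum_in :: _ \<Rightarrow> _ \<Rightarrow> _ \<Rightarrow> real"
  have bound: "\<bar>?T u v w\<bar> \<le> real N ^ 2 * eta"
    if "u \<in> {f_unf, f_fine}" "v \<in> {f_unf, f_fine}" "w \<in> {f_unf, f_fine}" "f_unf \<in> {u, v, w}"
    for u v w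
  proof (rule coarse.ap3_sum_in_real_bound)
    show "\<bar>u x\<bar> \<le> 1" "\<bar>v x\<bar> \<le> 1" "\<bar>w x\<bar> \<le> 1" for x
      using that abs_f_unf_le_1 f_fine_01[of x] by auto
    show "(\<forall>z\<in>V. cmod (fourier (\<lambda>x. complex_of_real (u x)) z) \<le> eta) \<or>
          (\<forall>z\<in>V. cmod (fourier (\<lambda>x. complex_of_real (v x)) z) \<le> eta) \<or>
          (\<forall>z\<in>V. cmod (fourier (\<lambda>x. complex_of_real (w x)) z) \<le> eta)"
      using that(4) small by auto
  qed
  have "?T a a a = ?T f_fine f_fine f_fine + (?T f_unf f_fine f_fine + ?T f_fine f_unf f_fine
      + ?T f_fine f_fine f_unf + ?T f_unf f_unf f_fine + ?T f_unf f_fine f_unf + ?T f_fine f_unf f_unf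
      + ?T f_unf f_unf f_unf)"
    by (rule coarse.ap3_sum_in_add_expand[of f_fine f_unf, folded a_split])
  then show ?thesis
    using ap3_sum_in_fine_ge
      bound[of f_unf f_fine f_fine] bound[of f_fine f_unf f_fine] bound[of f_fine f_fine f_unf]
      bound[of f_unf f_unf f_fine] bound[of f_unf f_fine f_unf] bound[of f_fine f_unf f_unf]
      bound[of f_unf f_unf f_unf]
    by (simp add: abs_le_iff)
qed

end

section \<open>Annihilators\<close>

definition annihilator :: "nat \<Rightarrow> nat \<Rightarrow> (nat \<Rightarrow> nat) set \<Rightarrow> (nat \<Rightarrow> nat) set" where
  "annihilator p n X = {x \<in> Fpn p n. \<forall>u\<in>X. p dvd dotp n u x}"

context Fpn_space begin

lemma dotp_vadd_cong: "[dotp n u (vadd p x y) = dotp n u x + dotp n u y] (mod p)"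
  unfolding dotp_def sum.distrib[symmetric] distrib_left[symmetric]
  by (rule cong_sum, rule cong_scalar_left, rule vadd_cong)

lemma dotp_vsmult_cong: "[dotp n u (vsmult p c x) = c * dotp n u x] (mod p)"
  unfolding dotp_def sum_distrib_left
  by (rule cong_sum) (metis cong_scalar_left mult.assoc mult.left_commute vsmult_cong)

lemma dotp_vzero: "dotp n u vzero = 0" by (simp add: dotp_def vzero_def)

lemma linear_subspace_inter_annihilator:
  assumes "linear_subspace p n K"
  shows "linear_subspace p n (K \<inter> annihilator p n X)"
proof -
  have dvd_add: "p dvd dotp n u (vadd p x y)" if "p dvd dotp n u x" "p dvd dotp n u y" for u x y
    using dotp_vadd_cong[of u x y] that by (metis cong_dvd_iff cong_sym dvd_add)
  have dvd_sm: "p dvd dotp n u (vsmult p c x)" if "p dvd dotp n u x" for u x c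
    using dotp_vsmult_cong[of u c x] that by (metis cong_dvd_iff cong_sym dvd_mult)
  show ?thesis using assms
    unfolding linear_subspace_def annihilator_def
    by (auto simp: dvd_add dvd_sm dotp_vzero)
qed

lemma chi_annihilator: "u \<in> X \<Longrightarrow> h \<in> annihilator p n X \<Longrightarrow> chi u h = 1"
  unfolding annihilator_def chi_def using ep_1_iff[OF one_le_p] by auto

lemma card_le_inter_annihilator_single:
  assumes K: "linear_subspace p n K"
  shows "card K \<le> p * card (K \<inter> annihilator p n {u})"
proof -
  interpret KK: Fpn_subspace p n K using K by unfold_locales
  interpret K2: Fpn_subspace p n "K \<inter> annihilator p n {u}" using linear_subspace_inter_annihilator[OF K] by unfold_locales
  define F where "F t = {x \<in> K. dotp n u x mod p = t}" for t
  have cov: "K \<subseteq> (\<Union>t<p. F t)" unfolding F_def using p_pos by auto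
  have cF: "card (F t) \<le> card (K \<inter> annihilator p n {u})" for t
  proof (cases "F t = {}")
    case True then show ?thesis by simp
  next
    case False
    then obtain x0 where x0: "x0 \<in> F t" by blast
    have "inj_on (\<lambda>y. vadd p y (vneg p x0)) (F t)"
      by (rule inj_onI) (auto simp: F_def dest: KK.H_in_Fpn intro: vadd_right_cancel)
    moreover have "(\<lambda>y. vadd p y (vneg p x0)) ` F t \<subseteq> K \<inter> annihilator p n {u}"
    proof
      fix z assume "z \<in> (\<lambda>y. vadd p y (vneg p x0)) ` F t"
      then obtain y where y: "y \<in> F t" "z = vadd p y (vneg p x0)" by blast
      have yK: "y \<in> K" "x0 \<in> K" using y x0 by (auto simp: F_def)
      have zK: "z \<in> K" using y yK by simp
      have "[dotp n u z = dotp n u y + (p - 1) * dotp n u x0] (mod p)"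
        using dotp_vadd_cong[of u y "vneg p x0"] dotp_vsmult_cong[of u "p - 1" x0] y(2)
        unfolding vneg_def by (metis cong_add cong_refl cong_trans)
      moreover have "[dotp n u y = dotp n u x0] (mod p)" using y x0 by (simp add: F_def cong_def)
      ultimately have "[dotp n u z = 0] (mod p)"
        using cong_neg_iff[of "dotp n u y" "dotp n u x0"] by (metis cong_trans)
      then show "z \<in> K \<inter> annihilator p n {u}" using zK KK.H_in_Fpn[OF zK] by (simp add: annihilator_def cong_0_iff)
    qed
    ultimately show ?thesis by (meson K2.finite_H card_inj_on_le)
  qed
  have "card K \<le> card (\<Union>t<p. F t)" by (rule card_mono) (auto simp: F_def intro: cov)
  also have "\<dots> \<le> (\<Sum>t<p. card (F t))" by (rule card_UN_le) simp
  also have "\<dots> \<le> (\<Sum>t<p. card (K \<inter> annihilator p n {u}))" by (rule sum_mono) (rule cF)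
  finally show ?thesis by simp
qed

lemma card_le_inter_annihilator:
  assumes K: "linear_subspace p n K" and X: "finite X"
  shows "card K \<le> p ^ card X * card (K \<inter> annihilator p n X)"
  using X
proof (induction X rule: finite_induct)
  case empty
  have "K \<inter> annihilator p n {} = K" using K by (auto simp: annihilator_def linear_subspace_def)
  then show ?case by simp
next
  case (insert u X)
  have "card K \<le> p ^ card X * card (K \<inter> annihilator p n X)" by (rule insert.IH)
  also have "card (K \<inter> annihilator p n X) \<le> p * card ((K \<inter> annihilator p n X) \<inter> annihilator p n {u})"
    by (rule card_le_inter_annihilator_single[OF linear_subspace_inter_annihilator[OF K]])
  also have "(K \<inter> annihilator p n X) \<inter> annihilator p n {u} = K \<inter> annihilator p n (insert u X)"
    by (auto simp: annihilator_def)
  finally show ?case using insert by (simp add: mult_ac)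
qed

end

section \<open>The energy-increment argument\<close>

text \<open>\<open>density_floor p \<epsilon> j\<close> is a lower bound for the relative size of the \<open>j\<close>-th subspace of the
  energy-increment chain: passing to the next subspace annihilates at most \<open>1/\<eta>\<^sub>j\<^sup>2\<close> large
  Fourier coefficients (Parseval), where the threshold \<open>\<eta>\<^sub>j = spec_threshold p \<epsilon> j\<close> is chosen so
  that the seven error terms of the counting lemma cost at most \<open>\<epsilon>\<^sup>3/2\<close> of the main term.\<close>

fun density_floor :: "nat \<Rightarrow> real \<Rightarrow> nat \<Rightarrow> real" where
  "density_floor p \<epsilon> 0 = \<epsilon>"
| "density_floor p \<epsilon> (Suc j) =
     density_floor p \<epsilon> j / real p ^ nat \<lceil>1 / (\<epsilon> ^ 3 * density_floor p \<epsilon> j / 14)^2\<rceil>"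

definition spec_threshold :: "nat \<Rightarrow> real \<Rightarrow> nat \<Rightarrow> real" where
  "spec_threshold p \<epsilon> j = \<epsilon> ^ 3 * density_floor p \<epsilon> j / 14"

lemma density_floor_pos: "0 < p \<Longrightarrow> 0 < \<epsilon> \<Longrightarrow> 0 < density_floor p \<epsilon> j"
  by (induction j) auto

lemma density_floor_antimono:
  assumes "0 < p" "0 < \<epsilon>" "j \<le> k"
  shows "density_floor p \<epsilon> k \<le> density_floor p \<epsilon> j"
proof (rule lift_Suc_antimono_le[OF _ assms(3)])
  fix i
  have "1 \<le> real p ^ nat \<lceil>1 / (\<epsilon> ^ 3 * density_floor p \<epsilon> i / 14)^2\<rceil>"
    using assms(1) by (simp add: one_le_power)
  then show "density_floor p \<epsilon> (Suc i) \<le> density_floor p \<epsilon> i"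
    using divide_left_mono[of 1 _ "density_floor p \<epsilon> i"] density_floor_pos[OF assms(1,2), of i]
    by simp
qed

locale Fpn_set = Fpn_space +
  fixes A :: "(nat \<Rightarrow> nat) set"
  assumes A_subset: "A \<subseteq> V"
begin

definition ind :: "(nat \<Rightarrow> nat) \<Rightarrow> real" where
  "ind x = of_bool (x \<in> A)"

definition set_density :: real where
  "set_density = real (card A) / real N"

definition energy :: "(nat \<Rightarrow> nat) set \<Rightarrow> real" where
  "energy K = (\<Sum>x\<in>V. (Fpn_subspace.avg p K ind x)^2)"

definition large_spectrum :: "real \<Rightarrow> (nat \<Rightarrow> nat) set" where
  "large_spectrum \<eta> = {z \<in> V. \<eta> \<le> cmod (fourier (\<lambda>x. complex_of_real (ind x)) z)}"

primrec spec_chain :: "(nat \<Rightarrow> nat) set \<Rightarrow> (nat \<Rightarrow> real) \<Rightarrow> nat \<Rightarrow> (nat \<Rightarrow> nat) set" where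
  "spec_chain H0 \<eta> 0 = H0"
| "spec_chain H0 \<eta> (Suc j) = spec_chain H0 \<eta> j \<inter> annihilator p n (large_spectrum (\<eta> j))"

lemma ind_01: "0 \<le> ind x" "ind x \<le> 1"
  by (simp_all add: ind_def)

lemma sum_ind: "(\<Sum>x\<in>V. ind x) = real (card A)"
proof -
  have "(\<Sum>x\<in>V. ind x) = real (card (V \<inter> {x. x \<in> A}))"
    unfolding ind_def by (rule sum_of_bool_eq) simp_all
  also have "V \<inter> {x. x \<in> A} = A" using A_subset by blast
  finally show ?thesis .
qed

lemma card_A_eq: "real (card A) = set_density * real N"
  by (simp add: set_density_def)

lemma set_density_bounds: "0 \<le> set_density" "set_density \<le> 1"
  using card_mono[OF finite_Fpn A_subset] by (simp_all add: set_density_def)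

lemma coset_decomposition_ind:
  assumes "linear_subspace p n K" "linear_subspace p n K'" "K' \<subseteq> K"
  shows "coset_decomposition p n K K' ind"
  using assms ind_01
  by (simp add: coset_decomposition_def coset_decomposition_axioms_def nested_subspaces_def
      nested_subspaces_axioms_def Fpn_space_axioms)

lemma energy_mono:
  assumes "linear_subspace p n K" "linear_subspace p n K'" "K' \<subseteq> K"
  shows "energy K \<le> energy K'"
proof -
  interpret D: coset_decomposition p n K K' ind by (rule coset_decomposition_ind[OF assms])
  have "0 \<le> (\<Sum>x\<in>V. (D.f_sml x)^2)" by (simp add: sum_nonneg)
  then show ?thesis using D.sum_f_sml_sq by (simp add: energy_def D.f_str_def D.f_fine_def)
qed

lemma energy_bounds:
  assumes "linear_subspace p n K"
  shows "0 \<le> energy K" "energy K \<le> real N"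
proof -
  interpret K: Fpn_subspace p n K using assms Fpn_subspace_iff by blast
  show "0 \<le> energy K" by (simp add: energy_def sum_nonneg)
  have "energy K \<le> (\<Sum>x\<in>V. 1)"
    unfolding energy_def by (rule sum_mono) (use K.avg_bounds ind_01 in \<open>simp add: power_le_one\<close>)
  then show "energy K \<le> real N" by simp
qed

lemma sum_avg_ind_minus_density_sq:
  assumes "linear_subspace p n K"
  shows "(\<Sum>x\<in>V. (Fpn_subspace.avg p K ind x - set_density)^2) = energy K - real N * set_density^2"
proof -
  interpret K: Fpn_subspace p n K using assms Fpn_subspace_iff by blast
  have "(\<Sum>x\<in>V. (K.avg ind x - set_density)^2)
      = energy K - 2 * set_density * (\<Sum>x\<in>V. K.avg ind x) + real N * set_density^2"
    by (simp add: energy_def power2_diff sum.distrib sum_subtractf sum_distrib_left algebra_simps)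
  then show ?thesis using K.sum_avg[of ind] sum_ind card_A_eq by (simp add: power2_eq_square)
qed

lemma avg_ind_on_coset:
  assumes H0: "linear_subspace p n H0" and x: "x \<in> vadd p a0 ` H0"
  shows "Fpn_subspace.avg p H0 ind x = real (card (A \<inter> vadd p a0 ` H0)) / real (card H0)"
proof -
  interpret H0: Fpn_subspace p n H0 using H0 Fpn_subspace_iff by blast
  have inj: "inj_on (vadd p a0) H0"
    by (rule inj_onI) (metis H0.H_in_Fpn vadd_comm vadd_right_cancel)
  obtain h1 where h1: "h1 \<in> H0" and x: "x = vadd p a0 h1" using x by blast
  have "(\<Sum>h\<in>H0. ind (vadd p x h)) = (\<Sum>h\<in>H0. ind (vadd p a0 (vadd p h1 h)))"
    by (simp add: x vadd_assoc)
  also have "\<dots> = (\<Sum>h\<in>H0. ind (vadd p a0 h))" by (rule H0.sum_H_translate[OF h1])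
  also have "\<dots> = (\<Sum>s\<in>vadd p a0 ` H0. ind s)" by (simp add: sum.reindex[OF inj])
  also have "\<dots> = real (card (vadd p a0 ` H0 \<inter> A))" by (simp add: ind_def)
  finally show ?thesis by (simp add: H0.avg_def Int_commute)
qed

lemma deviation_imp_variance:
  assumes H0: "linear_subspace p n H0" and a0: "a0 \<in> V" and \<epsilon>: "0 \<le> \<epsilon>"
    and dev: "\<epsilon> * real N < \<bar>real (card (A \<inter> vadd p a0 ` H0))
                  - real (card A) * real (card (vadd p a0 ` H0)) / real N\<bar>"
  shows "\<epsilon> * real N < real (card H0)" "\<epsilon> < set_density"
    "\<epsilon>^2 * real N \<le> (\<Sum>x\<in>V. (Fpn_subspace.avg p H0 ind x - set_density)^2)"
proof -
  interpret H0: Fpn_subspace p n H0 using H0 Fpn_subspace_iff by blast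
  let ?\<alpha> = set_density and ?N = "real N"
  define S where "S = vadd p a0 ` H0"
  define c where "c = real (card (A \<inter> S))"
  define m where "m = real (card H0)"
  have inj: "inj_on (vadd p a0) H0"
    by (rule inj_onI) (metis H0.H_in_Fpn vadd_comm vadd_right_cancel)
  then have card_S: "card S = card H0" unfolding S_def by (rule card_image)
  have SV: "S \<subseteq> V" unfolding S_def using a0 H0.H_in_Fpn by auto
  have finS: "finite S" using finite_subset[OF SV finite_Fpn] .
  have m_pos: "0 < m" using H0.card_H_pos by (simp add: m_def)
  have m_le: "m \<le> ?N" using card_mono[OF finite_Fpn SV] card_S by (simp add: m_def)
  have c_bounds: "0 \<le> c" "c \<le> m" "c \<le> real (card A)"
    using card_mono[OF finS, of "A \<inter> S"] card_S
      card_mono[OF finite_subset[OF A_subset finite_Fpn], of "A \<inter> S"]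
    by (auto simp: c_def m_def)
  have "real (card A) * real (card S) / ?N = ?\<alpha> * m"
    by (simp add: set_density_def m_def card_S)
  then have dev': "\<epsilon> * ?N < \<bar>c - ?\<alpha> * m\<bar>"
    using dev by (simp only: c_def S_def)
  have \<alpha>m: "0 \<le> ?\<alpha> * m" "?\<alpha> * m \<le> m" "?\<alpha> * m \<le> ?\<alpha> * ?N"
    using set_density_bounds m_pos m_le
    by (simp, simp add: mult_left_le_one_le, simp add: mult_left_mono)
  have "\<bar>c - ?\<alpha> * m\<bar> \<le> m"
    unfolding abs_le_iff using c_bounds \<alpha>m by linarith
  then show "\<epsilon> * ?N < m" using dev' by linarith
  have "\<bar>c - ?\<alpha> * m\<bar> \<le> ?\<alpha> * ?N"
    unfolding abs_le_iff using c_bounds \<alpha>m card_A_eq by linarith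
  then have "\<epsilon> * ?N < ?\<alpha> * ?N" using dev' by linarith
  then show "\<epsilon> < ?\<alpha>" by simp
  have on_S: "H0.avg ind x = c / m" if "x \<in> S" for x
    using avg_ind_on_coset[OF H0 that[unfolded S_def]] by (simp add: c_def m_def S_def)
  have "(\<epsilon> * ?N)^2 \<le> \<bar>c - ?\<alpha> * m\<bar>^2"
    using dev' \<epsilon> by (intro power_mono) simp_all
  then have "\<epsilon>^2 * ?N = (\<epsilon> * ?N)^2 / ?N" by (simp add: power2_eq_square)
  also have "\<dots> \<le> (c - ?\<alpha> * m)^2 / m"
    using m_pos m_le \<open>(\<epsilon> * ?N)^2 \<le> \<bar>c - ?\<alpha> * m\<bar>^2\<close> by (intro frac_le) simp_all
  also have "\<dots> = m * (c / m - ?\<alpha>)^2"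
    using m_pos by (simp add: power2_eq_square field_simps)
  also have "\<dots> = (\<Sum>x\<in>S. (H0.avg ind x - ?\<alpha>)^2)"
    by (simp add: on_S card_S m_def)
  also have "\<dots> \<le> (\<Sum>x\<in>V. (H0.avg ind x - ?\<alpha>)^2)"
    by (rule sum_mono2[OF finite_Fpn SV]) simp
  finally show "\<epsilon>^2 * ?N \<le> (\<Sum>x\<in>V. (H0.avg ind x - ?\<alpha>)^2)" .
qed

lemma finite_large_spectrum: "finite (large_spectrum \<eta>)"
  by (rule finite_subset[of _ V]) (auto simp: large_spectrum_def)

lemma card_large_spectrum:
  assumes "0 < \<eta>"
  shows "card (large_spectrum \<eta>) \<le> nat \<lceil>1 / \<eta>^2\<rceil>"
proof -
  let ?f = "fourier (\<lambda>x. complex_of_real (ind x))"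
  have sub: "large_spectrum \<eta> \<subseteq> V" by (auto simp: large_spectrum_def)
  have "real (card (large_spectrum \<eta>)) * \<eta>^2 = (\<Sum>z\<in>large_spectrum \<eta>. \<eta>^2)" by simp
  also have "\<dots> \<le> (\<Sum>z\<in>large_spectrum \<eta>. (cmod (?f z))^2)"
    by (rule sum_mono) (use assms in \<open>auto simp: large_spectrum_def intro!: power_mono\<close>)
  also have "\<dots> \<le> (\<Sum>z\<in>V. (cmod (?f z))^2)" by (rule sum_mono2[OF finite_Fpn sub]) simp
  also have "\<dots> \<le> 1" by (rule parseval_le_1) (simp add: ind_def)
  finally have "real (card (large_spectrum \<eta>)) \<le> 1 / \<eta>^2"
    using assms by (simp add: field_simps)
  then have "int (card (large_spectrum \<eta>)) \<le> \<lceil>1 / \<eta>^2\<rceil>"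
    using le_of_int_ceiling[of "1 / \<eta>^2"] by linarith
  then show ?thesis by linarith
qed

lemma linear_subspace_spec_chain:
  "linear_subspace p n H0 \<Longrightarrow> linear_subspace p n (spec_chain H0 \<eta> j)"
  by (induction j) (simp_all add: linear_subspace_inter_annihilator)

lemma card_spec_chain_Suc:
  assumes "linear_subspace p n H0" "0 < \<eta> j"
  shows "card (spec_chain H0 \<eta> j) \<le> p ^ nat \<lceil>1 / (\<eta> j)^2\<rceil> * card (spec_chain H0 \<eta> (Suc j))"
proof -
  have "card (spec_chain H0 \<eta> j)
      \<le> p ^ card (large_spectrum (\<eta> j)) * card (spec_chain H0 \<eta> (Suc j))"
    using card_le_inter_annihilator[OF linear_subspace_spec_chain[OF assms(1)] finite_large_spectrum]
    by simp
  also have "\<dots> \<le> p ^ nat \<lceil>1 / (\<eta> j)^2\<rceil> * card (spec_chain H0 \<eta> (Suc j))"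
    using power_increasing[OF card_large_spectrum[OF assms(2)] one_le_p] by simp
  finally show ?thesis .
qed

lemma card_spec_chain_ge:
  assumes H0: "linear_subspace p n H0" and \<epsilon>: "0 < \<epsilon>" and big: "\<epsilon> * real N \<le> real (card H0)"
  shows "density_floor p \<epsilon> j * real N \<le> real (card (spec_chain H0 (spec_threshold p \<epsilon>) j))"
proof (induction j)
  case 0
  then show ?case using big by simp
next
  case (Suc j)
  let ?K = "spec_chain H0 (spec_threshold p \<epsilon>)" and ?s = "nat \<lceil>1 / (spec_threshold p \<epsilon> j)^2\<rceil>"
  have "0 < spec_threshold p \<epsilon> j"
    using density_floor_pos[OF p_pos \<epsilon>] \<epsilon> by (simp add: spec_threshold_def)
  then have "card (?K j) \<le> p ^ ?s * card (?K (Suc j))" by (rule card_spec_chain_Suc[OF H0])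
  then have "real (card (?K j)) \<le> real p ^ ?s * real (card (?K (Suc j)))"
    by (simp only: of_nat_le_iff of_nat_mult[symmetric] of_nat_power[symmetric])
  then have "real (card (?K j)) / real p ^ ?s \<le> real (card (?K (Suc j)))"
    using p_pos by (simp add: pos_divide_le_eq algebra_simps del: spec_chain.simps)
  moreover have "density_floor p \<epsilon> (Suc j) = density_floor p \<epsilon> j / real p ^ ?s"
    by (simp add: spec_threshold_def)
  then have "density_floor p \<epsilon> (Suc j) * real N \<le> real (card (?K j)) / real p ^ ?s"
    using Suc.IH by (simp add: divide_right_mono del: spec_chain.simps density_floor.simps)
  ultimately show ?case by linarith
qed

text \<open>Averaging over the cosets of a subspace keeps exactly the Fourier coefficients at characters
  trivial on it (\<open>fourier_avg\<close>), and the annihilator makes every large coefficient such a one.\<close>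

lemma fourier_ind_minus_avg_spec_chain:
  assumes H0: "linear_subspace p n H0" and "0 \<le> \<eta> j" "z \<in> V"
  shows "cmod (fourier (\<lambda>x. complex_of_real
            (ind x - Fpn_subspace.avg p (spec_chain H0 \<eta> (Suc j)) ind x)) z) \<le> \<eta> j"
proof -
  let ?K = "spec_chain H0 \<eta> (Suc j)" and ?a = "\<lambda>x. complex_of_real (ind x)"
  interpret K: Fpn_subspace p n ?K
    using linear_subspace_spec_chain[OF H0] Fpn_subspace_iff by blast
  have "(\<lambda>x. complex_of_real (ind x - K.avg ind x)) = (\<lambda>x. ?a x - K.avg ?a x)"
    by (rule ext) (simp only: of_real_diff K.avg_of_real)
  then have eq: "fourier (\<lambda>x. complex_of_real (ind x - K.avg ind x)) z
      = (if \<forall>h\<in>?K. chi z h = 1 then 0 else fourier ?a z)"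
    by (simp add: fourier_diff K.fourier_avg del: spec_chain.simps)
  show ?thesis
  proof (cases "z \<in> large_spectrum (\<eta> j)")
    case True
    then have "\<forall>h\<in>?K. chi z h = 1" using chi_annihilator[OF True] by simp
    then show ?thesis unfolding eq using assms(2) by (simp del: spec_chain.simps)
  next
    case False
    then have "cmod (fourier ?a z) \<le> \<eta> j" using assms(3) by (simp add: large_spectrum_def)
    then show ?thesis unfolding eq using assms(2) by (simp del: spec_chain.simps)
  qed
qed

lemma ap3_sum_in_ind_lower_bound:
  assumes K: "linear_subspace p n K" and K': "linear_subspace p n K'" "K' \<subseteq> K"
    and \<epsilon>: "0 < \<epsilon>" "\<epsilon> < set_density"
    and var: "\<epsilon>^2 * real N \<le> (\<Sum>x\<in>V. (Fpn_subspace.avg p K ind x - set_density)^2)"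
    and inc: "energy K' - energy K \<le> \<epsilon>^3 / 2 * real N"
    and small: "\<forall>z\<in>V. cmod (fourier (\<lambda>x. complex_of_real
                  (ind x - Fpn_subspace.avg p K' ind x)) z) \<le> \<eta>"
    and err: "14 * (real N * \<eta>) \<le> \<epsilon>^3 * real (card K)"
  shows "real (card K) * real N * (set_density^3 + \<epsilon>^3) \<le> Fpn_subspace.ap3_sum_in p n K ind ind ind"
proof -
  interpret D: coset_decomposition p n K K' ind by (rule coset_decomposition_ind[OF K K'])
  let ?\<alpha> = set_density and ?N = "real N" and ?k = "real (card K)"
  have "?N * ?\<alpha>^3 + 2 * ?\<alpha> * (\<Sum>x\<in>V. (D.f_str x - ?\<alpha>)^2) \<le> (\<Sum>x\<in>V. D.f_str x ^ 3)"
    using sum_cube_ge_variance[of V D.f_str ?\<alpha>] D.f_str_01 set_density_bounds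
      D.coarse.sum_avg[of ind] sum_ind card_A_eq
    by (simp add: D.f_str_def)
  moreover have "2 * \<epsilon> * (\<epsilon>^2 * ?N) \<le> 2 * ?\<alpha> * (\<Sum>x\<in>V. (D.f_str x - ?\<alpha>)^2)"
    using var \<epsilon> by (intro mult_mono) (simp_all add: D.f_str_def)
  ultimately have "?k * (?N * ?\<alpha>^3 + 2 * \<epsilon>^3 * ?N) \<le> ?k * (\<Sum>x\<in>V. D.f_str x ^ 3)"
    by (intro mult_left_mono) (simp_all add: power2_eq_square power3_eq_cube algebra_simps)
  moreover have "?k * (\<Sum>x\<in>V. (D.f_sml x)^2) \<le> ?k * (\<epsilon>^3 / 2 * ?N)"
    using inc D.sum_f_sml_sq
    by (intro mult_left_mono) (simp_all add: energy_def D.f_str_def D.f_fine_def)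
  moreover have "D.f_unf = (\<lambda>x. ind x - D.fine.avg ind x)"
    by (simp add: fun_eq_iff D.f_unf_def D.f_fine_def)
  then have "?k * (\<Sum>x\<in>V. D.f_str x ^ 3) - ?k * (\<Sum>x\<in>V. (D.f_sml x)^2) - 7 * (?N^2 * \<eta>)
      \<le> D.coarse.ap3_sum_in ind ind ind"
    using D.ap3_sum_in_lower_bound small by simp
  moreover have "7 * (?N^2 * \<eta>) \<le> ?k * (\<epsilon>^3 / 2 * ?N)"
    using mult_left_mono[OF err, of "?N / 2"] by (simp add: power2_eq_square algebra_simps)
  ultimately show ?thesis by (simp add: algebra_simps)
qed

lemma spec_chain_small_increment:
  assumes H0: "linear_subspace p n H0" and M: "1 < real M * \<epsilon> ^ 3 / 2"
    and var: "\<epsilon>^2 * real N \<le> (\<Sum>x\<in>V. (Fpn_subspace.avg p H0 ind x - set_density)^2)"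
  obtains j where "j < M"
    "energy (spec_chain H0 \<eta> (Suc j)) - energy (spec_chain H0 \<eta> j) \<le> \<epsilon>^3 / 2 * real N"
    "\<epsilon>^2 * real N \<le> (\<Sum>x\<in>V. (Fpn_subspace.avg p (spec_chain H0 \<eta> j) ind x - set_density)^2)"
proof -
  let ?K = "spec_chain H0 \<eta>"
  have K_lin: "linear_subspace p n (?K j)" for j by (rule linear_subspace_spec_chain[OF H0])
  have mono: "energy (?K j) \<le> energy (?K (Suc j))" for j
    by (rule energy_mono[OF K_lin K_lin]) auto
  have "1 * real N < (real M * \<epsilon> ^ 3 / 2) * real N"
    using M by (intro mult_strict_right_mono) simp_all
  then have "real N < real M * (\<epsilon>^3 / 2 * real N)" by (simp add: algebra_simps)
  then have "\<exists>j<M. energy (?K (Suc j)) - energy (?K j) \<le> \<epsilon>^3 / 2 * real N"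
    using exists_small_increment[of "\<lambda>j. energy (?K j)" M "real N"] energy_bounds[OF K_lin]
    by blast
  then obtain j where "j < M" and inc: "energy (?K (Suc j)) - energy (?K j) \<le> \<epsilon>^3 / 2 * real N"
    by blast
  moreover have "energy (?K 0) \<le> energy (?K j)"
    by (rule lift_Suc_mono_le[of "\<lambda>j. energy (?K j)", OF mono]) simp
  then have "\<epsilon>^2 * real N \<le> (\<Sum>x\<in>V. (Fpn_subspace.avg p (?K j) ind x - set_density)^2)"
    using var sum_avg_ind_minus_density_sq[OF K_lin, of 0] sum_avg_ind_minus_density_sq[OF K_lin, of j]
    by simp
  ultimately show thesis using that by blast
qed

lemma propR_imp_propP:
  assumes \<epsilon>: "0 < \<epsilon>" and M: "1 < real M * \<epsilon> ^ 3 / 2"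
    and R: "propR p n (\<epsilon> ^ 3 * density_floor p \<epsilon> M / 2) A"
  shows "propP p n \<epsilon> A"
proof (rule ccontr)
  let ?\<alpha> = set_density and ?N = "real N" and ?L = "density_floor p \<epsilon>"
  assume "\<not> propP p n \<epsilon> A"
  then obtain a0 H0 where a0: "a0 \<in> V" and H0: "linear_subspace p n H0"
    and dev: "\<epsilon> * ?N < \<bar>real (card (A \<inter> vadd p a0 ` H0))
                  - real (card A) * real (card (vadd p a0 ` H0)) / ?N\<bar>"
    unfolding propP_def affine_subspace_def by (auto simp: not_le)
  note H0_big = deviation_imp_variance[OF H0 a0 less_imp_le[OF \<epsilon>] dev]
  define \<eta> where "\<eta> = spec_threshold p \<epsilon>"
  define K where "K = spec_chain H0 \<eta>"
  obtain j where "j < M" and inc: "energy (K (Suc j)) - energy (K j) \<le> \<epsilon>^3 / 2 * ?N"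
    and var: "\<epsilon>^2 * ?N \<le> (\<Sum>x\<in>V. (Fpn_subspace.avg p (K j) ind x - ?\<alpha>)^2)"
    using spec_chain_small_increment[OF H0 M H0_big(3)] unfolding K_def by blast
  have K_lin: "linear_subspace p n (K j')" for j'
    unfolding K_def by (rule linear_subspace_spec_chain[OF H0])
  have "0 < \<eta> j"
    using density_floor_pos[OF p_pos \<epsilon>] \<epsilon> by (simp add: \<eta>_def spec_threshold_def)
  then have small: "\<forall>z\<in>V. cmod (fourier (\<lambda>x. complex_of_real
                  (ind x - Fpn_subspace.avg p (K (Suc j)) ind x)) z) \<le> \<eta> j"
    using fourier_ind_minus_avg_spec_chain[OF H0] by (simp add: K_def)
  define k where "k = real (card (K j))"
  define T where "T = Fpn_subspace.ap3_sum_in p n (K j) ind ind ind"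
  have k_ge: "?L j * ?N \<le> k"
    using card_spec_chain_ge[OF H0 \<epsilon>] H0_big(1) by (simp add: k_def K_def \<eta>_def)
  have "14 * (?N * \<eta> j) = \<epsilon>^3 * (?L j * ?N)"
    by (simp add: \<eta>_def spec_threshold_def)
  also have "\<dots> \<le> \<epsilon>^3 * k"
    using k_ge \<epsilon> by (intro mult_left_mono) simp_all
  finally have err: "14 * (?N * \<eta> j) \<le> \<epsilon>^3 * k" .
  have "k * ?N * (?\<alpha>^3 + \<epsilon>^3) \<le> T"
    unfolding k_def T_def
    by (rule ap3_sum_in_ind_lower_bound[OF K_lin K_lin _ \<epsilon> H0_big(2) var inc small err[unfolded k_def]])
      (simp add: K_def)
  moreover have "T \<le> real (card A) ^ 3 * k / ?N^2 + \<epsilon>^3 * ?L M / 2 * ?N^2"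
    using R K_lin[of j] Fpn_subspace_iff
    by (simp add: propR_def Fpn_subspace.ap3_sum_in_def ind_def k_def T_def)
  moreover have "real (card A) ^ 3 * k / ?N^2 = k * ?N * ?\<alpha>^3"
    by (simp add: card_A_eq power3_eq_cube power2_eq_square field_simps)
  moreover have "k * ?N * (?\<alpha>^3 + \<epsilon>^3) = k * ?N * ?\<alpha>^3 + \<epsilon>^3 * (?N * k)"
    "\<epsilon>^3 * ?L M / 2 * ?N^2 = \<epsilon>^3 * (?N * (?L M * ?N / 2))"
    by (simp_all add: algebra_simps power2_eq_square)
  ultimately have "\<epsilon>^3 * (?N * k) \<le> \<epsilon>^3 * (?N * (?L M * ?N / 2))" by linarith
  then have "k \<le> ?L M * ?N / 2" using \<epsilon> by simp
  moreover have "?L M * ?N \<le> ?L j * ?N"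
    using density_floor_antimono[OF p_pos \<epsilon>, of j M] \<open>j < M\<close> by simp
  moreover have "0 < ?L M * ?N" using density_floor_pos[OF p_pos \<epsilon>] by simp
  ultimately show False using k_ge by linarith
qed

end

theorem mainTheorem17:
  fixes p :: nat and \<epsilon> :: real
  assumes "prime p" and "odd p" and "\<epsilon> > 0"
  shows "\<exists>\<delta>>0. \<forall>n. \<forall>A. A \<subseteq> Fpn p n \<longrightarrow> propR p n \<delta> A \<longrightarrow> propP p n \<epsilon> A"
proof -
  define M where "M = nat \<lceil>2 / \<epsilon> ^ 3\<rceil> + 1"
  have "2 / \<epsilon> ^ 3 < real M" unfolding M_def by linarith
  then have M: "1 < real M * \<epsilon> ^ 3 / 2" using assms(3) by (simp add: field_simps)
  have "0 < \<epsilon> ^ 3 * density_floor p \<epsilon> M / 2"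
    using density_floor_pos[OF prime_gt_0_nat[OF assms(1)] assms(3)] assms(3) by simp
  moreover have "propP p n \<epsilon> A"
    if "A \<subseteq> Fpn p n" "propR p n (\<epsilon> ^ 3 * density_floor p \<epsilon> M / 2) A" for n A
  proof -
    interpret Fpn_set p n A using assms(1,2) that(1) by unfold_locales
    show ?thesis by (rule propR_imp_propP[OF assms(3) M that(2)])
  qed
  ultimately show ?thesis by blast
qed

end
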